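(* For every sequent $\Gamma\Rightarrow\Delta$ of $\mathtt{TPDL}$, the following are equivalent: (1) $\Gamma\Rightarrow\Delta$ is provable in $\mathtt{GTPDL}$; (2) $\Gamma\Rightarrow\Delta$ is provable in $\mathtt{CGTPDL}$; (3) $\Gamma\Rightarrow\Delta$ is valid.
   Context: Fix sets $\mathsf{Prop}$ and $\mathsf{AtProg}$. $\mathtt{TPDL}$ formulas/programs: $\varphi ::= \bot \mid p \mid (\varphi\to\varphi) \mid [\pi]\varphi \mid [\pi]^{\leftarrow}\varphi$, $\pi ::= \alpha \mid \pi;\pi \mid \pi\cup\pi \mid \pi^{*} \mid \varphi?$. $[\pi]\Gamma=\{[\pi]\varphi:\varphi\in\Gamma\}$, similarly $[\pi]^{\leftarrow}\Gamma$. A model is $M=(W,(R_\alpha),V)$, $W\neq\emptyset$, $R_\alpha\subseteq W\times W$, $V:W\to\mathcal P(\mathsf{Prop})$; $R_{\pi_0;\pi_1}$ composition, $R_{\pi_0\cup\pi_1}$ union, $R_{\pi^*}$ reflexive–transitive closure of $R_\pi$, $R_{\psi?}=\{(w,w):M,w\models\psi\}$; $M,w\not\models\bot$, $M,w\models p$ iff $p\in V(w)$, $\to$ classical, $M,w\models[\pi]\varphi$ iff $\varphi$ holds at all $v$ with $wR_\pi v$, $M,w\models[\pi]^{\leftarrow}\varphi$ iff $\varphi$ holds at all $v$ with $vR_\pi w$. A sequent is a pair of finite sets of formulas; valid means in every model at every state where all of $\Gamma$ hold, some formula of $\Delta$ holds. Common rules (premises / conclusion): (Ax) / $\Gamma\Rightarrow\Delta$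 with $\Gamma\cap\Delta\neq\emptyset$; ($\bot$) / $\Gamma,\bot\Rightarrow\Delta$; ($\to$L) $\Gamma\Rightarrow\varphi,\Delta$ and $\Gamma,\psi\Rightarrow\Delta$ / $\Gamma,\varphi\to\psi\Rightarrow\Delta$; ($\to$R) $\Gamma,\varphi\Rightarrow\psi,\Delta$ / $\Gamma\Rightarrow\varphi\to\psi,\Delta$; (Wk) $\Gamma\Rightarrow\Delta$ / $\Gamma'\Rightarrow\Delta'$, $\Gamma\subseteq\Gamma'$, $\Delta\subseteq\Delta'$; (Cut) $\Gamma\Rightarrow\varphi,\Delta$ and $\Gamma,\varphi\Rightarrow\Delta$ / $\Gamma\Rightarrow\Delta$; ($[\,]$) $\Gamma\Rightarrow\varphi,[\pi]^{\leftarrow}\Delta$ / $[\pi]\Gamma\Rightarrow[\pi]\varphi,\Delta$; ($[\,]^{\leftarrow}$) $\Gamma\Rightarrow\varphi,[\pi]\Delta$ / $[\pi]^{\leftarrow}\Gamma\Rightarrow[\pi]^{\leftarrow}\varphi,\Delta$; ($[;]$L) $\Gamma,[\pi_0][\pi_1]\varphi\Rightarrow\Delta$ / $\Gamma,[\pi_0;\pi_1]\varphi\Rightarrow\Delta$; ($[;]$R) $\Gamma\Rightarrow[\pi_0][\pi_1]\varphi,\Delta$ / $\Gamma\Rightarrow[\pi_0;\pi_1]\varphi,\Delta$; ($[\cup]$L) $\Gamma,[\pi_0]\varphi,[\pi_1]\varphi\Rightarrow\Delta$ / $\Gamma,[\pi_0\cup\pi_1]\varphi\Rightarrow\Delta$;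 ($[\cup]$R) $\Gamma\Rightarrow\Delta,[\pi_0]\varphi$ and $\Gamma\Rightarrow\Delta,[\pi_1]\varphi$ / $\Gamma\Rightarrow[\pi_0\cup\pi_1]\varphi,\Delta$; ($[*]$L) $\Gamma,\varphi,[\pi][\pi^*]\varphi\Rightarrow\Delta$ / $\Gamma,[\pi^*]\varphi\Rightarrow\Delta$; ($[?]$L) $\Gamma\Rightarrow\varphi,\Delta$ and $\Gamma,\psi\Rightarrow\Delta$ / $\Gamma,[\varphi?]\psi\Rightarrow\Delta$; ($[?]$R) $\Gamma,\varphi\Rightarrow\psi,\Delta$ / $\Gamma\Rightarrow[\varphi?]\psi,\Delta$. $\mathtt{GTPDL}$ = common rules plus ($[*]$R) $\Gamma,\varphi\Rightarrow[\pi]\varphi$ / $[\pi^*]\Gamma,\varphi\Rightarrow[\pi^*]\varphi$; a $\mathtt{GTPDL}$ proof is a finite tree of sequents each node concluding a rule instance with its children as premises (leaves are Ax/$\bot$). $\mathtt{CGTPDL}$ = common rules plus (C-s) $\Gamma\Rightarrow\varphi,\Delta$ and $\Gamma\Rightarrow[\pi][\pi^*]\varphi,\Delta$ / $\Gamma\Rightarrow[\pi^*]\varphi,\Delta$. $\mathtt{CGTPDL}$ proofs: a pre-proof is a finite tree of sequents built from rule instances whose leaves are Ax/$\bot$ instances or buds, together with an assignment to each bud of a companion, an inner node with the same sequent; the derivation graph identifies each bud with its companion; a path is a sequence of nodes each a premise of the previous one's rule instance. A trace following a path $(\Gamma_i\Rightarrow\Delta_i)$ is a sequence $(\tau_i)$,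 $\tau_i\in\Delta_i$, such that: at ($\to$R) with principal $\varphi\to\psi$, $\tau_{i+1}=\tau_i$ or ($\tau_i=\varphi\to\psi$ and $\tau_{i+1}=\psi$); at ($[\,]$) with principal $[\pi]\varphi$, $\tau_i=[\pi]\varphi$, $\tau_{i+1}=\varphi$; at ($[\,]^{\leftarrow}$) with principal $[\pi]^{\leftarrow}\varphi$, $\tau_i=[\pi]^{\leftarrow}\varphi$, $\tau_{i+1}=\varphi$; at ($[;]$R), $\tau_{i+1}=\tau_i$ or $\tau_i=[\pi_0;\pi_1]\varphi$ (principal) and $\tau_{i+1}=[\pi_0][\pi_1]\varphi$; at ($[\cup]$R) going to the premise with $[\pi_j]\varphi$, $\tau_{i+1}=\tau_i$ or $\tau_i$ principal and $\tau_{i+1}=[\pi_j]\varphi$; at ($[?]$R), $\tau_{i+1}=\tau_i$ or $\tau_i=[\varphi?]\psi$ principal and $\tau_{i+1}=\psi$; at (C-s) with principal $[\pi^*]\varphi$, going to the first premise, $\tau_{i+1}=\tau_i$ or ($\tau_i=[\pi^*]\varphi$, $\tau_{i+1}=\varphi$); going to the second premise, $\tau_{i+1}=\tau_i$ or ($\tau_i=[\pi^*]\varphi$, $\tau_{i+1}=[\pi][\pi^*]\varphi$, a progress point); all other rules $\tau_{i+1}=\tau_i$. Global trace condition: every infinite path has a tail followed by a trace with infinitely many progress points. A $\mathtt{CGTPDL}$ proof is a pre-proof satisfying the global trace condition. *)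

theory Defs
  imports Main "HOL-Library.FSet"
begin

datatype ('p, 'a) fm =
    Bot
  | Var 'p
  | Imp "('p, 'a) fm" "('p, 'a) fm"
  | Box "('p, 'a) pg" "('p, 'a) fm"
  | BoxC "('p, 'a) pg" "('p, 'a) fm"
and ('p, 'a) pg =
    At 'a
  | Sq "('p, 'a) pg" "('p, 'a) pg"
  | Ch "('p, 'a) pg" "('p, 'a) pg"
  | Star "('p, 'a) pg"
  | Test "('p, 'a) fm"

type_synonym ('p, 'a) seq = "('p, 'a) fm fset \<times> ('p, 'a) fm fset"

fun sat :: "'w set \<Rightarrow> ('a \<Rightarrow> ('w \<times> 'w) set) \<Rightarrow> ('w \<Rightarrow> 'p set) \<Rightarrow> 'w \<Rightarrow> ('p, 'a) fm \<Rightarrow> bool"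
and rel :: "'w set \<Rightarrow> ('a \<Rightarrow> ('w \<times> 'w) set) \<Rightarrow> ('w \<Rightarrow> 'p set) \<Rightarrow> ('p, 'a) pg \<Rightarrow> ('w \<times> 'w) set"
where
  "sat W R V w Bot = False"
| "sat W R V w (Var p) = (p \<in> V w)"
| "sat W R V w (Imp \<phi> \<psi>) = (sat W R V w \<phi> \<longrightarrow> sat W R V w \<psi>)"
| "sat W R V w (Box \<pi> \<phi>) = (\<forall>v. (w, v) \<in> rel W R V \<pi> \<longrightarrow> sat W R V v \<phi>)"
| "sat W R V w (BoxC \<pi> \<phi>) = (\<forall>v. (v, w) \<in> rel W R V \<pi> \<longrightarrow> sat W R V v \<phi>)"
| "rel W R V (At a) = R a"
| "rel W R V (Sq \<pi>0 \<pi>1) = rel W R V \<pi>0 O rel W R V \<pi>1"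
| "rel W R V (Ch \<pi>0 \<pi>1) = rel W R V \<pi>0 \<union> rel W R V \<pi>1"
| "rel W R V (Star \<pi>) = Id_on W \<union> (rel W R V \<pi>)\<^sup>+"
| "rel W R V (Test \<phi>) = {(w, w) | w. w \<in> W \<and> sat W R V w \<phi>}"

definition valid :: "'w itself \<Rightarrow> ('p, 'a) seq \<Rightarrow> bool" where
  "valid _ S \<longleftrightarrow>
     (\<forall>(W :: 'w set) R V. W \<noteq> {} \<and> (\<forall>a. R a \<subseteq> W \<times> W) \<longrightarrow>
        (\<forall>w \<in> W. (\<forall>\<phi>. \<phi> |\<in>| fst S \<longrightarrow> sat W R V w \<phi>) \<longrightarrow> (\<exists>\<psi>. \<psi> |\<in>| snd S \<and> sat W R V w \<psi>)))"

text \<open>Rule labels; they record the rule and its principal formula.\<close>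
datatype ('p, 'a) rl =
    RAx | RBot | RImpL "('p, 'a) fm" "('p, 'a) fm" | RImpR "('p, 'a) fm" "('p, 'a) fm"
  | RWk | RCut "('p, 'a) fm"
  | RBox "('p, 'a) pg" "('p, 'a) fm" | RBoxC "('p, 'a) pg" "('p, 'a) fm"
  | RSqL "('p, 'a) pg" "('p, 'a) pg" "('p, 'a) fm" | RSqR "('p, 'a) pg" "('p, 'a) pg" "('p, 'a) fm"
  | RChL "('p, 'a) pg" "('p, 'a) pg" "('p, 'a) fm" | RChR "('p, 'a) pg" "('p, 'a) pg" "('p, 'a) fm"
  | RStarL "('p, 'a) pg" "('p, 'a) fm"
  | RTestL "('p, 'a) fm" "('p, 'a) fm" | RTestR "('p, 'a) fm" "('p, 'a) fm"
  | RStarR "('p, 'a) pg" "('p, 'a) fm"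
  | RCs "('p, 'a) pg" "('p, 'a) fm"

text \<open>common r S Ps: S is the conclusion and Ps the (ordered) list of premises of an instance of
  the common rule r.\<close>
inductive common :: "('p, 'a) rl \<Rightarrow> ('p, 'a) seq \<Rightarrow> ('p, 'a) seq list \<Rightarrow> bool" where
  Ax: "\<Gamma> |\<inter>| \<Delta> \<noteq> {||} \<Longrightarrow> common RAx (\<Gamma>, \<Delta>) []"
| BotL: "common RBot (finsert Bot \<Gamma>, \<Delta>) []"
| ImpL: "common (RImpL \<phi> \<psi>) (finsert (Imp \<phi> \<psi>) \<Gamma>, \<Delta>) [(\<Gamma>, finsert \<phi> \<Delta>), (finsert \<psi> \<Gamma>, \<Delta>)]"
| ImpR: "common (RImpR \<phi> \<psi>) (\<Gamma>, finsert (Imp \<phi> \<psi>) \<Delta>) [(finsert \<phi> \<Gamma>, finsert \<psi> \<Delta>)]"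
| Wk: "\<Gamma> |\<subseteq>| \<Gamma>' \<Longrightarrow> \<Delta> |\<subseteq>| \<Delta>' \<Longrightarrow> common RWk (\<Gamma>', \<Delta>') [(\<Gamma>, \<Delta>)]"
| Cut: "common (RCut \<phi>) (\<Gamma>, \<Delta>) [(\<Gamma>, finsert \<phi> \<Delta>), (finsert \<phi> \<Gamma>, \<Delta>)]"
| BoxR: "common (RBox \<pi> \<phi>) (fimage (Box \<pi>) \<Gamma>, finsert (Box \<pi> \<phi>) \<Delta>)
           [(\<Gamma>, finsert \<phi> (fimage (BoxC \<pi>) \<Delta>))]"
| BoxCR: "common (RBoxC \<pi> \<phi>) (fimage (BoxC \<pi>) \<Gamma>, finsert (BoxC \<pi> \<phi>) \<Delta>)
           [(\<Gamma>, finsert \<phi> (fimage (Box \<pi>) \<Delta>))]"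
| SqL: "common (RSqL \<pi>0 \<pi>1 \<phi>) (finsert (Box (Sq \<pi>0 \<pi>1) \<phi>) \<Gamma>, \<Delta>)
          [(finsert (Box \<pi>0 (Box \<pi>1 \<phi>)) \<Gamma>, \<Delta>)]"
| SqR: "common (RSqR \<pi>0 \<pi>1 \<phi>) (\<Gamma>, finsert (Box (Sq \<pi>0 \<pi>1) \<phi>) \<Delta>)
          [(\<Gamma>, finsert (Box \<pi>0 (Box \<pi>1 \<phi>)) \<Delta>)]"
| ChL: "common (RChL \<pi>0 \<pi>1 \<phi>) (finsert (Box (Ch \<pi>0 \<pi>1) \<phi>) \<Gamma>, \<Delta>)
          [(finsert (Box \<pi>0 \<phi>) (finsert (Box \<pi>1 \<phi>) \<Gamma>), \<Delta>)]"
| ChR: "common (RChR \<pi>0 \<pi>1 \<phi>) (\<Gamma>, finsert (Box (Ch \<pi>0 \<pi>1) \<phi>) \<Delta>)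
          [(\<Gamma>, finsert (Box \<pi>0 \<phi>) \<Delta>), (\<Gamma>, finsert (Box \<pi>1 \<phi>) \<Delta>)]"
| StarL: "common (RStarL \<pi> \<phi>) (finsert (Box (Star \<pi>) \<phi>) \<Gamma>, \<Delta>)
          [(finsert \<phi> (finsert (Box \<pi> (Box (Star \<pi>) \<phi>)) \<Gamma>), \<Delta>)]"
| TestL: "common (RTestL \<phi> \<psi>) (finsert (Box (Test \<phi>) \<psi>) \<Gamma>, \<Delta>)
          [(\<Gamma>, finsert \<phi> \<Delta>), (finsert \<psi> \<Gamma>, \<Delta>)]"
| TestR: "common (RTestR \<phi> \<psi>) (\<Gamma>, finsert (Box (Test \<phi>) \<psi>) \<Delta>)
          [(finsert \<phi> \<Gamma>, finsert \<psi> \<Delta>)]"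

inductive ginst :: "('p, 'a) rl \<Rightarrow> ('p, 'a) seq \<Rightarrow> ('p, 'a) seq list \<Rightarrow> bool" where
  gcommon: "common r S Ps \<Longrightarrow> ginst r S Ps"
| StarR: "ginst (RStarR \<pi> \<phi>) (finsert \<phi> (fimage (Box (Star \<pi>)) \<Gamma>), {|Box (Star \<pi>) \<phi>|})
            [(finsert \<phi> \<Gamma>, {|Box \<pi> \<phi>|})]"

inductive cinst :: "('p, 'a) rl \<Rightarrow> ('p, 'a) seq \<Rightarrow> ('p, 'a) seq list \<Rightarrow> bool" where
  ccommon: "common r S Ps \<Longrightarrow> cinst r S Ps"
| Cs: "cinst (RCs \<pi> \<phi>) (\<Gamma>, finsert (Box (Star \<pi>) \<phi>) \<Delta>)
          [(\<Gamma>, finsert \<phi> \<Delta>), (\<Gamma>, finsert (Box \<pi> (Box (Star \<pi>) \<phi>)) \<Delta>)]"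

inductive gprov :: "('p, 'a) seq \<Rightarrow> bool" where
  "ginst r S Ps \<Longrightarrow> (\<forall>P \<in> set Ps. gprov P) \<Longrightarrow> gprov S"

text \<open>A pre-proof is a finite tree with node set N (natural numbers as node names), root rt,
  ordered children lists ch, sequent labels sq, rule labels lb, and a partial companion
  assignment cp (cp n = Some c iff n is a bud with companion c).\<close>

definition tedges :: "nat set \<Rightarrow> (nat \<Rightarrow> nat list) \<Rightarrow> (nat \<times> nat) set" where
  "tedges N ch = {(n, m). n \<in> N \<and> m \<in> set (ch n)}"

definition preproof ::
  "nat set \<Rightarrow> nat \<Rightarrow> (nat \<Rightarrow> nat list) \<Rightarrow> (nat \<Rightarrow> ('p, 'a) seq) \<Rightarrow> (nat \<Rightarrow> ('p, 'a) rl)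
     \<Rightarrow> (nat \<Rightarrow> nat option) \<Rightarrow> bool" where
  "preproof N rt ch sq lb cp \<longleftrightarrow>
     finite N \<and> rt \<in> N \<and>
     \<comment> \<open>tree structure\<close>
     (\<forall>n \<in> N. set (ch n) \<subseteq> N \<and> distinct (ch n)) \<and>
     (\<forall>n \<in> N. rt \<notin> set (ch n)) \<and>
     (\<forall>m \<in> N. m \<noteq> rt \<longrightarrow> (\<exists>!n. n \<in> N \<and> m \<in> set (ch n))) \<and>
     (\<forall>m \<in> N. (rt, m) \<in> (tedges N ch)\<^sup>*) \<and>
     acyclic (tedges N ch) \<and>
     \<comment> \<open>every node is either a bud (leaf with a companion) or concludes a rule instance\<close>
     (\<forall>n \<in> N.
        (case cp n of
           Some c \<Rightarrow> ch n = [] \<and> c \<in> N \<and> cp c = None \<and> ch c \<noteq> [] \<and> sq c = sq n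
         | None \<Rightarrow> cinst (lb n) (sq n) (map sq (ch n))))"

text \<open>In the derivation graph each bud is identified with its companion.\<close>
definition resolve :: "(nat \<Rightarrow> nat option) \<Rightarrow> nat \<Rightarrow> nat" where
  "resolve cp m = (case cp m of Some c \<Rightarrow> c | None \<Rightarrow> m)"

definition inf_path :: "nat set \<Rightarrow> (nat \<Rightarrow> nat list) \<Rightarrow> (nat \<Rightarrow> nat option)
     \<Rightarrow> (nat \<Rightarrow> nat) \<Rightarrow> (nat \<Rightarrow> nat) \<Rightarrow> bool" where
  "inf_path N ch cp f idx \<longleftrightarrow> f 0 \<in> N \<and>
     (\<forall>k. idx k < length (ch (f k)) \<and> f (Suc k) = resolve cp (ch (f k) ! idx k))"

text \<open>Trace steps: tstep r i t t' holds if a trace may go from t (in the conclusion of rule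
  instance r) to t' (in its i-th premise, counting from 0).\<close>
fun tstep :: "('p, 'a) rl \<Rightarrow> nat \<Rightarrow> ('p, 'a) fm \<Rightarrow> ('p, 'a) fm \<Rightarrow> bool" where
  "tstep (RImpR \<phi> \<psi>) i t t' = (t' = t \<or> (t = Imp \<phi> \<psi> \<and> t' = \<psi>))"
| "tstep (RBox \<pi> \<phi>) i t t' = (t = Box \<pi> \<phi> \<and> t' = \<phi>)"
| "tstep (RBoxC \<pi> \<phi>) i t t' = (t = BoxC \<pi> \<phi> \<and> t' = \<phi>)"
| "tstep (RSqR \<pi>0 \<pi>1 \<phi>) i t t' = (t' = t \<or> (t = Box (Sq \<pi>0 \<pi>1) \<phi> \<and> t' = Box \<pi>0 (Box \<pi>1 \<phi>)))"
| "tstep (RChR \<pi>0 \<pi>1 \<phi>) i t t' =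
     (t' = t \<or> (t = Box (Ch \<pi>0 \<pi>1) \<phi> \<and> t' = Box (if i = 0 then \<pi>0 else \<pi>1) \<phi>))"
| "tstep (RTestR \<phi> \<psi>) i t t' = (t' = t \<or> (t = Box (Test \<phi>) \<psi> \<and> t' = \<psi>))"
| "tstep (RCs \<pi> \<phi>) i t t' =
     (t' = t \<or> (t = Box (Star \<pi>) \<phi> \<and> t' = (if i = 0 then \<phi> else Box \<pi> (Box (Star \<pi>) \<phi>))))"
| "tstep r i t t' = (t' = t)"

fun progress :: "('p, 'a) rl \<Rightarrow> nat \<Rightarrow> ('p, 'a) fm \<Rightarrow> ('p, 'a) fm \<Rightarrow> bool" where
  "progress (RCs \<pi> \<phi>) i t t' = (i = 1 \<and> t = Box (Star \<pi>) \<phi> \<and> t' = Box \<pi> (Box (Star \<pi>) \<phi>))"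
| "progress r i t t' = False"

definition global_trace_condition ::
  "nat set \<Rightarrow> (nat \<Rightarrow> nat list) \<Rightarrow> (nat \<Rightarrow> ('p, 'a) seq) \<Rightarrow> (nat \<Rightarrow> ('p, 'a) rl)
     \<Rightarrow> (nat \<Rightarrow> nat option) \<Rightarrow> bool" where
  "global_trace_condition N ch sq lb cp \<longleftrightarrow>
     (\<forall>f idx. inf_path N ch cp f idx \<longrightarrow>
        (\<exists>k0 (\<tau> :: nat \<Rightarrow> ('p, 'a) fm).
           (\<forall>k \<ge> k0. \<tau> k |\<in>| snd (sq (f k)) \<and> tstep (lb (f k)) (idx k) (\<tau> k) (\<tau> (Suc k))) \<and>
           (\<forall>m. \<exists>k \<ge> max m k0. progress (lb (f k)) (idx k) (\<tau> k) (\<tau> (Suc k)))))"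

definition cprov :: "('p, 'a) seq \<Rightarrow> bool" where
  "cprov S \<longleftrightarrow> (\<exists>N rt ch sq lb cp.
      preproof N rt ch sq lb cp \<and> global_trace_condition N ch sq lb cp \<and> sq rt = S)"

end

theory Submission
  imports Defs
begin

(* Soundness of both calculi: a state refuting the conclusion of a rule instance refutes some
   premise.  In a cyclic pre-proof this yields an infinite path of refuted sequents, and along it
   every traced formula carries a rank, the least number of star unfoldings needed to falsify
   it.  The rank never increases along a trace and drops at every progress point, so the global
   trace condition would give an infinite descent.

   Completeness holds for any set of sequents closed under the common rules and the induction
   rule  \<chi> \<Rightarrow> [\<pi>]\<chi> / \<chi> \<Rightarrow> [\<pi>\<^sup>*]\<chi>:  the atoms (maximal consistent subsets of the Fischer-Ladner
   closure of an underivable sequent) form a finite canonical model satisfying the truth lemma,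
   which is then renamed into nat.  GTPDL contains the induction rule, and CGTPDL derives it
   by a cycle; CGTPDL is closed under its rules by gluing pre-proofs. *)

section \<open>Failure ranks and soundness\<close>

lemma rel_subset_worlds: "(\<forall>a. R a \<subseteq> W \<times> W) \<Longrightarrow> rel W R V \<pi> \<subseteq> W \<times> W"
proof (induction \<pi> rule: pg.induct[where ?P1.0 = "\<lambda>_. True"])
  case (Star \<pi>)
  then show ?case using trancl_subset_Sigma[of "rel W R V \<pi>" W] by auto
qed auto

lemma rel_Star_stepL:
  "(w, u) \<in> rel W R V \<pi> \<Longrightarrow> (u, v) \<in> rel W R V (Star \<pi>) \<Longrightarrow> (w, v) \<in> rel W R V (Star \<pi>)"
  by (auto intro: trancl_into_trancl2)

lemma rel_Star_stepR:
  "(w, u) \<in> rel W R V (Star \<pi>) \<Longrightarrow> (u, v) \<in> rel W R V \<pi> \<Longrightarrow> (w, v) \<in> rel W R V (Star \<pi>)"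
  by (auto intro: trancl_into_trancl)

lemma rel_Star_iff_rtrancl:
  "w \<in> W \<Longrightarrow> (w, v) \<in> rel W R V (Star \<pi>) \<longleftrightarrow> (w, v) \<in> (rel W R V \<pi>)\<^sup>*"
  by (auto simp: rtrancl_eq_or_trancl)

(* fails W R V \<phi> w k: \<phi> is false at w by a refutation that unfolds boxed stars at most
   k times.  The least such k is the rank that strictly decreases at the progress points of a
   trace. *)
inductive fails :: "'w set \<Rightarrow> ('a \<Rightarrow> ('w \<times> 'w) set) \<Rightarrow> ('w \<Rightarrow> 'p set) \<Rightarrow> ('p, 'a) fm \<Rightarrow> 'w \<Rightarrow> nat \<Rightarrow> bool"
  for W R V where
  Bot: "fails W R V Bot w k"
| Var: "p \<notin> V w \<Longrightarrow> fails W R V (Var p) w k"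
| Imp: "sat W R V w \<phi> \<Longrightarrow> fails W R V \<psi> w k \<Longrightarrow> fails W R V (Imp \<phi> \<psi>) w k"
| BoxC: "(v, w) \<in> rel W R V \<pi> \<Longrightarrow> fails W R V \<phi> v k \<Longrightarrow> fails W R V (BoxC \<pi> \<phi>) w k"
| At: "(w, v) \<in> R a \<Longrightarrow> fails W R V \<phi> v k \<Longrightarrow> fails W R V (Box (At a) \<phi>) w k"
| Sq: "fails W R V (Box \<pi>0 (Box \<pi>1 \<phi>)) w k \<Longrightarrow> fails W R V (Box (Sq \<pi>0 \<pi>1) \<phi>) w k"
| Ch0: "fails W R V (Box \<pi>0 \<phi>) w k \<Longrightarrow> fails W R V (Box (Ch \<pi>0 \<pi>1) \<phi>) w k"
| Ch1: "fails W R V (Box \<pi>1 \<phi>) w k \<Longrightarrow> fails W R V (Box (Ch \<pi>0 \<pi>1) \<phi>) w k"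
| Test: "w \<in> W \<Longrightarrow> sat W R V w \<psi> \<Longrightarrow> fails W R V \<phi> w k \<Longrightarrow> fails W R V (Box (Test \<psi>) \<phi>) w k"
| Star0: "w \<in> W \<Longrightarrow> fails W R V \<phi> w k \<Longrightarrow> fails W R V (Box (Star \<pi>) \<phi>) w k"
| StarS: "fails W R V (Box \<pi> (Box (Star \<pi>) \<phi>)) w k \<Longrightarrow> fails W R V (Box (Star \<pi>) \<phi>) w (Suc k)"

inductive_cases fails_ImpE: "fails W R V (Imp \<phi> \<psi>) w k"
inductive_cases fails_BoxCE: "fails W R V (BoxC \<pi> \<phi>) w k"
inductive_cases fails_AtE: "fails W R V (Box (At a) \<phi>) w k"
inductive_cases fails_SqE: "fails W R V (Box (Sq \<pi>0 \<pi>1) \<phi>) w k"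
inductive_cases fails_ChE: "fails W R V (Box (Ch \<pi>0 \<pi>1) \<phi>) w k"
inductive_cases fails_TestE: "fails W R V (Box (Test \<psi>) \<phi>) w k"
inductive_cases fails_StarE: "fails W R V (Box (Star \<pi>) \<phi>) w k"

lemma fails_mono: "fails W R V \<phi> w k \<Longrightarrow> k \<le> k' \<Longrightarrow> fails W R V \<phi> w k'"
proof (induction arbitrary: k' rule: fails.induct)
  case (StarS \<pi> \<phi> w k)
  then obtain k'' where "k' = Suc k''" "k \<le> k''" by (cases k') auto
  with StarS show ?case by (auto intro: fails.intros)
qed (auto intro: fails.intros)

lemma fails_imp_not_sat: "fails W R V \<phi> w k \<Longrightarrow> \<not> sat W R V w \<phi>"
proof (induction rule: fails.induct)
  case (StarS \<pi> \<phi> w k)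
  then show ?case by (meson rel_Star_stepL sat.simps(4))
qed auto

lemma fails_Star_witness:
  assumes IH: "\<And>\<phi> w k. fails W R V (Box \<pi> \<phi>) w k \<Longrightarrow> \<exists>v. (w, v) \<in> rel W R V \<pi> \<and> fails W R V \<phi> v k"
  shows "fails W R V (Box (Star \<pi>) \<phi>) w k \<Longrightarrow> \<exists>v. (w, v) \<in> rel W R V (Star \<pi>) \<and> fails W R V \<phi> v k"
proof (induction k arbitrary: w)
  case 0
  then show ?case by (auto elim: fails_StarE)
next
  case (Suc k)
  then consider "w \<in> W" "fails W R V \<phi> w (Suc k)" | "fails W R V (Box \<pi> (Box (Star \<pi>) \<phi>)) w k"
    by (auto elim: fails_StarE)
  then show ?case
  proof cases
    case 2
    then obtain u where "(w, u) \<in> rel W R V \<pi>" "fails W R V (Box (Star \<pi>) \<phi>) u k"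
      using IH by blast
    moreover obtain v where "(u, v) \<in> rel W R V (Star \<pi>)" "fails W R V \<phi> v k"
      using Suc.IH calculation(2) by blast
    ultimately show ?thesis by (meson rel_Star_stepL fails_mono le_SucI order_refl)
  qed auto
qed

lemma fails_Box_witness:
  "fails W R V (Box \<pi> \<phi>) w k \<Longrightarrow> \<exists>v. (w, v) \<in> rel W R V \<pi> \<and> fails W R V \<phi> v k"
proof (induction \<pi> arbitrary: \<phi> w k rule: pg.induct[where ?P1.0 = "\<lambda>_. True"])
  case (Sq \<pi>0 \<pi>1)
  from Sq.prems have "fails W R V (Box \<pi>0 (Box \<pi>1 \<phi>)) w k" by (auto elim: fails_SqE)
  then obtain u where "(w, u) \<in> rel W R V \<pi>0" "fails W R V (Box \<pi>1 \<phi>) u k" using Sq.IH(1) by blast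
  with Sq.IH(2) show ?case by fastforce
next
  case (Ch \<pi>0 \<pi>1)
  from Ch.prems show ?case by (elim fails_ChE) (use Ch.IH in \<open>metis Un_iff rel.simps(3)\<close>)+
next
  case (Star \<pi>)
  show ?case by (rule fails_Star_witness[OF Star.IH Star.prems])
qed (auto elim: fails_AtE fails_TestE)

context
  fixes W :: "'w set" and R :: "'a \<Rightarrow> ('w \<times> 'w) set" and V :: "'w \<Rightarrow> 'p set"
  assumes R_worlds: "\<forall>a. R a \<subseteq> W \<times> W"
begin

lemma fails_BoxI:
  "(w, v) \<in> rel W R V \<pi> \<Longrightarrow> fails W R V \<phi> v k \<Longrightarrow> \<exists>k'. fails W R V (Box \<pi> \<phi>) w k'"
proof (induction \<pi> arbitrary: w v \<phi> k rule: pg.induct[where ?P1.0 = "\<lambda>_. True"])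
  case (Sq \<pi>0 \<pi>1)
  then obtain u where "(w, u) \<in> rel W R V \<pi>0" "(u, v) \<in> rel W R V \<pi>1" by auto
  with Sq show ?case by (meson fails.Sq)
next
  case (Ch \<pi>0 \<pi>1)
  then show ?case by (metis Un_iff rel.simps(3) fails.Ch0 fails.Ch1)
next
  case (Star \<pi>)
  have "v \<in> W" using Star.prems(1) rel_subset_worlds[OF R_worlds] by blast
  with Star.prems have "fails W R V (Box (Star \<pi>) \<phi>) v k" by (blast intro: fails.Star0)
  from Star.prems(1) consider "w = v" | "(w, v) \<in> (rel W R V \<pi>)\<^sup>+" by auto
  then show ?case
  proof cases
    case 2
    then show ?thesis
      by (induction rule: converse_trancl_induct)
        (use Star.IH \<open>fails W R V (Box (Star \<pi>) \<phi>) v k\<close> in \<open>blast intro: fails.StarS\<close>)+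
  qed (use \<open>fails W R V (Box (Star \<pi>) \<phi>) v k\<close> in blast)
qed (auto intro: fails.At fails.Test)

lemma not_sat_imp_fails: "\<not> sat W R V w \<theta> \<Longrightarrow> \<exists>k. fails W R V \<theta> w k"
proof (induction \<theta> arbitrary: w rule: fm.induct[where ?P2.0 = "\<lambda>_. True"])
  case (Box \<pi> \<phi>)
  then show ?case by (meson fails_BoxI sat.simps(4))
next
  case (BoxC \<pi> \<phi>)
  then show ?case by (meson fails.BoxC sat.simps(5))
next
  case (Imp \<phi> \<psi>)
  then show ?case by (meson fails.Imp sat.simps(3))
qed (auto intro: fails.intros)

lemma least_fails:
  assumes "\<not> sat W R V w \<theta>"
  obtains k0 where "fails W R V \<theta> w k0" "\<And>k. fails W R V \<theta> w k \<Longrightarrow> k0 \<le> k"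
  using not_sat_imp_fails[OF assms] by (metis LeastI Least_le)

end

definition refutes :: "'w set \<Rightarrow> ('a \<Rightarrow> ('w \<times> 'w) set) \<Rightarrow> ('w \<Rightarrow> 'p set) \<Rightarrow> ('p, 'a) seq \<Rightarrow> 'w \<Rightarrow> bool"
  where "refutes W R V S w \<longleftrightarrow> w \<in> W \<and> (\<forall>\<phi>. \<phi> |\<in>| fst S \<longrightarrow> sat W R V w \<phi>) \<and> (\<forall>\<psi>. \<psi> |\<in>| snd S \<longrightarrow> \<not> sat W R V w \<psi>)"

definition trace_rank_descent ::
  "'w set \<Rightarrow> ('a \<Rightarrow> ('w \<times> 'w) set) \<Rightarrow> ('w \<Rightarrow> 'p set) \<Rightarrow> ('p, 'a) rl \<Rightarrow> ('p, 'a) seq \<Rightarrow> nat \<Rightarrow> 'w \<Rightarrow> 'w \<Rightarrow> bool"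
  where "trace_rank_descent W R V r S i w w' \<longleftrightarrow>
     (\<forall>t t' j. tstep r i t t' \<longrightarrow> t |\<in>| snd S \<longrightarrow> fails W R V t w j \<longrightarrow> fails W R V t' w' j) \<and>
     (\<forall>t t' j. progress r i t t' \<longrightarrow> fails W R V t w j \<longrightarrow> (\<exists>j'<j. fails W R V t' w' j'))"

lemma trace_rank_descentD:
  assumes "trace_rank_descent W R V r S i w w'"
  shows "tstep r i t t' \<Longrightarrow> t |\<in>| snd S \<Longrightarrow> fails W R V t w j \<Longrightarrow> fails W R V t' w' j"
    and "progress r i t t' \<Longrightarrow> fails W R V t w j \<Longrightarrow> \<exists>j'<j. fails W R V t' w' j'"
  using assms unfolding trace_rank_descent_def by blast+

lemma trace_rank_descent_trivial:
  "(\<And>t t'. tstep r i t t' \<Longrightarrow> t' = t) \<Longrightarrow> (\<And>t t'. \<not> progress r i t t') \<Longrightarrow> trace_rank_descent W R V r S i w w"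
  unfolding trace_rank_descent_def by blast

context
  fixes W :: "'w set" and R :: "'a \<Rightarrow> ('w \<times> 'w) set" and V :: "'w \<Rightarrow> 'p set"
  assumes R_worlds: "\<forall>a. R a \<subseteq> W \<times> W"
begin

(* A refuted principal formula is followed to a witness of least failure rank, so that the
   traced formula keeps its rank in the premise. *)
lemma refutation_step_Box:
  assumes "refutes W R V (Box \<pi> |`| \<Gamma>, finsert (Box \<pi> \<phi>) \<Delta>) w"
  shows "\<exists>v. refutes W R V (\<Gamma>, finsert \<phi> (BoxC \<pi> |`| \<Delta>)) v \<and>
    trace_rank_descent W R V (RBox \<pi> \<phi>) (Box \<pi> |`| \<Gamma>, finsert (Box \<pi> \<phi>) \<Delta>) 0 w v"
proof -
  have "\<not> sat W R V w (Box \<pi> \<phi>)" using assms by (simp add: refutes_def)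
  then obtain k0 where k0: "fails W R V (Box \<pi> \<phi>) w k0" "\<And>k. fails W R V (Box \<pi> \<phi>) w k \<Longrightarrow> k0 \<le> k"
    using least_fails[OF R_worlds] by blast
  obtain v where v: "(w, v) \<in> rel W R V \<pi>" "fails W R V \<phi> v k0"
    using fails_Box_witness[OF k0(1)] by blast
  have "v \<in> W" using v(1) rel_subset_worlds[OF R_worlds] by blast
  moreover have "\<not> sat W R V v \<phi>" using v(2) by (rule fails_imp_not_sat)
  ultimately have "refutes W R V (\<Gamma>, finsert \<phi> (BoxC \<pi> |`| \<Delta>)) v"
    using assms v(1) unfolding refutes_def by auto
  moreover have "fails W R V \<phi> v k" if "fails W R V (Box \<pi> \<phi>) w k" for k
    using fails_mono[OF v(2) k0(2)[OF that]] .
  then have "trace_rank_descent W R V (RBox \<pi> \<phi>) (Box \<pi> |`| \<Gamma>, finsert (Box \<pi> \<phi>) \<Delta>) 0 w v"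
    by (simp add: trace_rank_descent_def)
  ultimately show ?thesis by blast
qed

lemma refutation_step_BoxC:
  assumes "refutes W R V (BoxC \<pi> |`| \<Gamma>, finsert (BoxC \<pi> \<phi>) \<Delta>) w"
  shows "\<exists>v. refutes W R V (\<Gamma>, finsert \<phi> (Box \<pi> |`| \<Delta>)) v \<and>
    trace_rank_descent W R V (RBoxC \<pi> \<phi>) (BoxC \<pi> |`| \<Gamma>, finsert (BoxC \<pi> \<phi>) \<Delta>) 0 w v"
proof -
  have "\<not> sat W R V w (BoxC \<pi> \<phi>)" using assms by (simp add: refutes_def)
  then obtain k0 where k0: "fails W R V (BoxC \<pi> \<phi>) w k0" "\<And>k. fails W R V (BoxC \<pi> \<phi>) w k \<Longrightarrow> k0 \<le> k"
    using least_fails[OF R_worlds] by blast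
  obtain v where v: "(v, w) \<in> rel W R V \<pi>" "fails W R V \<phi> v k0"
    using k0(1) by (auto elim: fails_BoxCE)
  have "v \<in> W" using v(1) rel_subset_worlds[OF R_worlds] by blast
  moreover have "\<not> sat W R V v \<phi>" using v(2) by (rule fails_imp_not_sat)
  ultimately have "refutes W R V (\<Gamma>, finsert \<phi> (Box \<pi> |`| \<Delta>)) v"
    using assms v(1) unfolding refutes_def by auto
  moreover have "fails W R V \<phi> v k" if "fails W R V (BoxC \<pi> \<phi>) w k" for k
    using fails_mono[OF v(2) k0(2)[OF that]] .
  then have "trace_rank_descent W R V (RBoxC \<pi> \<phi>) (BoxC \<pi> |`| \<Gamma>, finsert (BoxC \<pi> \<phi>) \<Delta>) 0 w v"
    by (simp add: trace_rank_descent_def)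
  ultimately show ?thesis by blast
qed

lemma refutation_step_ChR:
  assumes "refutes W R V (\<Gamma>, finsert (Box (Ch \<pi>0 \<pi>1) \<phi>) \<Delta>) w"
  shows "\<exists>i<2. refutes W R V ([(\<Gamma>, finsert (Box \<pi>0 \<phi>) \<Delta>), (\<Gamma>, finsert (Box \<pi>1 \<phi>) \<Delta>)] ! i) w \<and>
    trace_rank_descent W R V (RChR \<pi>0 \<pi>1 \<phi>) (\<Gamma>, finsert (Box (Ch \<pi>0 \<pi>1) \<phi>) \<Delta>) i w w"
proof -
  have "\<not> sat W R V w (Box (Ch \<pi>0 \<pi>1) \<phi>)" using assms by (simp add: refutes_def)
  then obtain k0 where k0: "fails W R V (Box (Ch \<pi>0 \<pi>1) \<phi>) w k0"
      "\<And>k. fails W R V (Box (Ch \<pi>0 \<pi>1) \<phi>) w k \<Longrightarrow> k0 \<le> k"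
    using least_fails[OF R_worlds] by blast
  have "\<exists>i<2. fails W R V (Box ([\<pi>0, \<pi>1] ! i) \<phi>) w k0"
    using k0(1) by (elim fails_ChE) (auto intro: exI[of _ 0] exI[of _ 1])
  then obtain i where i: "i < 2" "fails W R V (Box ([\<pi>0, \<pi>1] ! i) \<phi>) w k0" by blast
  have "fails W R V (Box ([\<pi>0, \<pi>1] ! i) \<phi>) w k" if "fails W R V (Box (Ch \<pi>0 \<pi>1) \<phi>) w k" for k
    using fails_mono[OF i(2) k0(2)[OF that]] .
  then have "trace_rank_descent W R V (RChR \<pi>0 \<pi>1 \<phi>) (\<Gamma>, finsert (Box (Ch \<pi>0 \<pi>1) \<phi>) \<Delta>) i w w"
    using i(1) by (auto simp: trace_rank_descent_def less_2_cases_iff)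
  moreover have "refutes W R V ([(\<Gamma>, finsert (Box \<pi>0 \<phi>) \<Delta>), (\<Gamma>, finsert (Box \<pi>1 \<phi>) \<Delta>)] ! i) w"
    using assms fails_imp_not_sat[OF i(2)] i(1) by (auto simp: refutes_def less_2_cases_iff)
  ultimately show ?thesis using i(1) by blast
qed

lemma refutation_step_Cs:
  assumes "refutes W R V (\<Gamma>, finsert (Box (Star \<pi>) \<phi>) \<Delta>) w"
  shows "\<exists>i<2. refutes W R V ([(\<Gamma>, finsert \<phi> \<Delta>), (\<Gamma>, finsert (Box \<pi> (Box (Star \<pi>) \<phi>)) \<Delta>)] ! i) w \<and>
    trace_rank_descent W R V (RCs \<pi> \<phi>) (\<Gamma>, finsert (Box (Star \<pi>) \<phi>) \<Delta>) i w w"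
proof -
  have "\<not> sat W R V w (Box (Star \<pi>) \<phi>)" using assms by (simp add: refutes_def)
  then obtain k0 where k0: "fails W R V (Box (Star \<pi>) \<phi>) w k0"
      "\<And>k. fails W R V (Box (Star \<pi>) \<phi>) w k \<Longrightarrow> k0 \<le> k"
    using least_fails[OF R_worlds] by blast
  show ?thesis
  proof (cases "fails W R V \<phi> w k0")
    case True
    have "fails W R V \<phi> w k" if "fails W R V (Box (Star \<pi>) \<phi>) w k" for k
      using fails_mono[OF True k0(2)[OF that]] .
    then have "trace_rank_descent W R V (RCs \<pi> \<phi>) (\<Gamma>, finsert (Box (Star \<pi>) \<phi>) \<Delta>) 0 w w"
      by (auto simp: trace_rank_descent_def)
    moreover have "refutes W R V (\<Gamma>, finsert \<phi> \<Delta>) w"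
      using assms fails_imp_not_sat[OF True] by (simp add: refutes_def)
    ultimately show ?thesis by (intro exI[of _ 0]) simp
  next
    case False
    with k0(1) obtain k1 where k1: "k0 = Suc k1" "fails W R V (Box \<pi> (Box (Star \<pi>) \<phi>)) w k1"
      by (auto elim: fails_StarE)
    have "k1 < k \<and> fails W R V (Box \<pi> (Box (Star \<pi>) \<phi>)) w k"
      if "fails W R V (Box (Star \<pi>) \<phi>) w k" for k
      using k0(2)[OF that] k1 fails_mono[OF k1(2), of k] by auto
    with k1(2) have "trace_rank_descent W R V (RCs \<pi> \<phi>) (\<Gamma>, finsert (Box (Star \<pi>) \<phi>) \<Delta>) 1 w w"
      unfolding trace_rank_descent_def by auto
    moreover have "refutes W R V (\<Gamma>, finsert (Box \<pi> (Box (Star \<pi>) \<phi>)) \<Delta>) w"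
      using assms fails_imp_not_sat[OF k1(2)] by (simp add: refutes_def)
    ultimately show ?thesis by (intro exI[of _ 1]) simp
  qed
qed

lemma refutation_step_common:
  assumes c: "common r S Ps" and S: "refutes W R V S w"
  shows "\<exists>i w'. i < length Ps \<and> refutes W R V (Ps ! i) w' \<and> trace_rank_descent W R V r S i w w'"
  using c
proof cases
  case (ImpR \<phi> \<psi> \<Gamma> \<Delta>)
  have "trace_rank_descent W R V r S 0 w w"
    using ImpR by (auto simp: trace_rank_descent_def elim: fails_ImpE)
  with S ImpR show ?thesis by (intro exI[of _ 0] exI[of _ w]) (auto simp: refutes_def)
next
  case (SqR \<pi>0 \<pi>1 \<phi> \<Gamma> \<Delta>)
  have "trace_rank_descent W R V r S 0 w w"
    using SqR by (auto simp: trace_rank_descent_def elim: fails_SqE)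
  with S SqR show ?thesis by (intro exI[of _ 0] exI[of _ w]) (auto simp: refutes_def; blast)
next
  case (TestR \<phi> \<psi> \<Gamma> \<Delta>)
  have "trace_rank_descent W R V r S 0 w w"
    using TestR by (auto simp: trace_rank_descent_def elim: fails_TestE)
  with S TestR show ?thesis by (intro exI[of _ 0] exI[of _ w]) (auto simp: refutes_def)
next
  case (BoxR \<pi> \<phi> \<Gamma> \<Delta>)
  then show ?thesis using refutation_step_Box S by auto
next
  case (BoxCR \<pi> \<phi> \<Gamma> \<Delta>)
  then show ?thesis using refutation_step_BoxC S by auto
next
  case (ChR \<pi>0 \<pi>1 \<phi> \<Gamma> \<Delta>)
  with S have "refutes W R V (\<Gamma>, finsert (Box (Ch \<pi>0 \<pi>1) \<phi>) \<Delta>) w" by simp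
  from refutation_step_ChR[OF this] obtain i where "i < 2"
    "refutes W R V ([(\<Gamma>, finsert (Box \<pi>0 \<phi>) \<Delta>), (\<Gamma>, finsert (Box \<pi>1 \<phi>) \<Delta>)] ! i) w"
    "trace_rank_descent W R V (RChR \<pi>0 \<pi>1 \<phi>) (\<Gamma>, finsert (Box (Ch \<pi>0 \<pi>1) \<phi>) \<Delta>) i w w"
    by blast
  with ChR show ?thesis by (intro exI[of _ i] exI[of _ w]) auto
next
  case (StarL \<pi> \<phi> \<Gamma> \<Delta>)
  have "(w, w) \<in> rel W R V (Star \<pi>)" using S by (auto simp: refutes_def)
  then have "sat W R V w \<phi>" "sat W R V w (Box \<pi> (Box (Star \<pi>) \<phi>))"
    using S StarL by (auto simp: refutes_def simp del: rel.simps intro: rel_Star_stepL)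
  with S StarL show ?thesis
    by (intro exI[of _ 0] exI[of _ w]) (auto simp: refutes_def intro: trace_rank_descent_trivial)
next
  case (ImpL \<phi> \<psi> \<Gamma> \<Delta>)
  then show ?thesis
    using S by (intro exI[of _ "if sat W R V w \<phi> then 1 else 0"] exI[of _ w])
      (auto simp: refutes_def intro: trace_rank_descent_trivial)
next
  case (Cut \<phi> \<Gamma> \<Delta>)
  then show ?thesis
    using S by (intro exI[of _ "if sat W R V w \<phi> then 1 else 0"] exI[of _ w])
      (auto simp: refutes_def intro: trace_rank_descent_trivial)
next
  case (TestL \<phi> \<psi> \<Gamma> \<Delta>)
  then show ?thesis
    using S by (intro exI[of _ "if sat W R V w \<phi> then 1 else 0"] exI[of _ w])
      (auto simp: refutes_def intro: trace_rank_descent_trivial)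
next
  case (Wk \<Gamma> \<Gamma>' \<Delta> \<Delta>')
  with S show ?thesis
    by (intro exI[of _ 0] exI[of _ w]) (auto simp: refutes_def intro: trace_rank_descent_trivial)
next
  case (SqL \<pi>0 \<pi>1 \<phi> \<Gamma> \<Delta>)
  with S show ?thesis
    by (intro exI[of _ 0] exI[of _ w]) (auto simp: refutes_def intro: trace_rank_descent_trivial)
next
  case (ChL \<pi>0 \<pi>1 \<phi> \<Gamma> \<Delta>)
  with S show ?thesis
    by (intro exI[of _ 0] exI[of _ w]) (auto simp: refutes_def intro: trace_rank_descent_trivial)
qed (use S in \<open>auto simp: refutes_def\<close>)

lemma refutation_step:
  assumes "cinst r S Ps" and "refutes W R V S w"
  shows "\<exists>i w'. i < length Ps \<and> refutes W R V (Ps ! i) w' \<and> trace_rank_descent W R V r S i w w'"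
  using assms(1)
proof cases
  case ccommon
  then show ?thesis using refutation_step_common assms(2) by blast
next
  case (Cs \<pi> \<phi> \<Gamma> \<Delta>)
  with assms(2) have "refutes W R V (\<Gamma>, finsert (Box (Star \<pi>) \<phi>) \<Delta>) w" by simp
  from refutation_step_Cs[OF this] obtain i where "i < 2"
    "refutes W R V ([(\<Gamma>, finsert \<phi> \<Delta>), (\<Gamma>, finsert (Box \<pi> (Box (Star \<pi>) \<phi>)) \<Delta>)] ! i) w"
    "trace_rank_descent W R V (RCs \<pi> \<phi>) (\<Gamma>, finsert (Box (Star \<pi>) \<phi>) \<Delta>) i w w"
    by blast
  with Cs show ?thesis by (intro exI[of _ i] exI[of _ w]) auto
qed

end

lemma preproofD:
  assumes "preproof N rt ch sq lb cp"
  shows "finite N" "rt \<in> N" "\<And>n. n \<in> N \<Longrightarrow> set (ch n) \<subseteq> N \<and> distinct (ch n)"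
    "\<And>n. n \<in> N \<Longrightarrow> rt \<notin> set (ch n)"
    "\<And>m. m \<in> N \<Longrightarrow> m \<noteq> rt \<Longrightarrow> (\<exists>!n. n \<in> N \<and> m \<in> set (ch n))"
    "\<And>m. m \<in> N \<Longrightarrow> (rt, m) \<in> (tedges N ch)\<^sup>*"
    "acyclic (tedges N ch)"
  using assms unfolding preproof_def by blast+

lemma preproof_node:
  "preproof N rt ch sq lb cp \<Longrightarrow> n \<in> N \<Longrightarrow>
    (case cp n of
       Some c \<Rightarrow> ch n = [] \<and> c \<in> N \<and> cp c = None \<and> ch c \<noteq> [] \<and> sq c = sq n
     | None \<Rightarrow> cinst (lb n) (sq n) (map sq (ch n)))"
  unfolding preproof_def by blast

lemma preproof_inner_node:
  "preproof N rt ch sq lb cp \<Longrightarrow> n \<in> N \<Longrightarrow> cp n = None \<Longrightarrow> cinst (lb n) (sq n) (map sq (ch n))"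
  using preproof_node[of N rt ch sq lb cp n] by simp

lemma preproof_resolve:
  assumes "preproof N rt ch sq lb cp" and "m \<in> N"
  shows "resolve cp m \<in> N" "cp (resolve cp m) = None" "sq (resolve cp m) = sq m"
  using preproof_node[OF assms] assms(2) by (auto simp: resolve_def split: option.splits)

lemma no_infinite_descent_nat:
  fixes \<mu> :: "nat \<Rightarrow> nat"
  assumes dec: "\<And>k. \<mu> (Suc k) \<le> \<mu> k" and progress: "\<And>m. \<exists>k\<ge>m. \<mu> (Suc k) < \<mu> k"
  shows False
proof -
  have "\<exists>k. \<mu> k + n \<le> \<mu> 0" for n
  proof (induction n)
    case (Suc n)
    then obtain k where "\<mu> k + n \<le> \<mu> 0" by blast
    moreover obtain k' where "k' \<ge> k" "\<mu> (Suc k') < \<mu> k'" using progress by blast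
    moreover have "\<mu> k' \<le> \<mu> k" using lift_Suc_antimono_le[of \<mu>, OF dec \<open>k' \<ge> k\<close>] .
    ultimately show ?case by (intro exI[of _ "Suc k'"]) simp
  qed (rule exI[of _ 0], simp)
  then show False by (metis add_leD2 not_less_eq_eq)
qed

context
  fixes W :: "'w set" and R :: "'a \<Rightarrow> ('w \<times> 'w) set" and V :: "'w \<Rightarrow> 'p set"
  assumes R_worlds: "\<forall>a. R a \<subseteq> W \<times> W"
begin

lemma refuting_path:
  assumes pp: "preproof N rt ch sq lb cp" and root: "refutes W R V (sq rt) w0"
  obtains f idx ws where "inf_path N ch cp f idx"
    "\<And>k. refutes W R V (sq (f k)) (ws k)"
    "\<And>k. trace_rank_descent W R V (lb (f k)) (sq (f k)) (idx k) (ws k) (ws (Suc k))"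
proof -
  define P where "P = (\<lambda>(_ :: nat) (n, w). n \<in> N \<and> cp n = None \<and> refutes W R V (sq n) w)"
  define Q where "Q = (\<lambda>(_ :: nat) (n, w) (n', w'). \<exists>i < length (ch n).
    n' = resolve cp (ch n ! i) \<and> trace_rank_descent W R V (lb n) (sq n) i w w')"
  have "rt \<in> N" by (rule preproofD(2)[OF pp])
  then have "P 0 (resolve cp rt, w0)" using preproof_resolve[OF pp] root by (simp add: P_def)
  moreover have "\<exists>y. P (Suc k) y \<and> Q k x y" if "P k x" for x k
  proof -
    obtain n w where x: "x = (n, w)" "n \<in> N" "cp n = None" "refutes W R V (sq n) w"
      using \<open>P k x\<close> by (auto simp: P_def)
    obtain i w' where i: "i < length (ch n)" "refutes W R V (sq (ch n ! i)) w'"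
        "trace_rank_descent W R V (lb n) (sq n) i w w'"
      using refutation_step[OF R_worlds preproof_inner_node[OF pp x(2,3)] x(4)] by auto
    have "ch n ! i \<in> N" using preproofD(3)[OF pp x(2)] i(1) by auto
    then show ?thesis using preproof_resolve[OF pp] i x(1)
      by (intro exI[of _ "(resolve cp (ch n ! i), w')"]) (auto simp: P_def Q_def)
  qed
  ultimately obtain g where g: "\<And>k. P k (g k) \<and> Q k (g k) (g (Suc k))"
    using dependent_nat_choice[of P Q] by blast
  have "\<forall>k. \<exists>i. i < length (ch (fst (g k))) \<and> fst (g (Suc k)) = resolve cp (ch (fst (g k)) ! i) \<and>
      trace_rank_descent W R V (lb (fst (g k))) (sq (fst (g k))) i (snd (g k)) (snd (g (Suc k)))"
  proof
    fix k
    show "\<exists>i. i < length (ch (fst (g k))) \<and> fst (g (Suc k)) = resolve cp (ch (fst (g k)) ! i) \<and>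
      trace_rank_descent W R V (lb (fst (g k))) (sq (fst (g k))) i (snd (g k)) (snd (g (Suc k)))"
      using g[of k] by (cases "g k"; cases "g (Suc k)") (auto simp: Q_def)
  qed
  then obtain idx where "\<And>k. idx k < length (ch (fst (g k))) \<and> fst (g (Suc k)) = resolve cp (ch (fst (g k)) ! idx k) \<and>
      trace_rank_descent W R V (lb (fst (g k))) (sq (fst (g k))) (idx k) (snd (g k)) (snd (g (Suc k)))"
    by metis
  moreover have "fst (g k) \<in> N \<and> refutes W R V (sq (fst (g k))) (snd (g k))" for k
    using g[of k] by (cases "g k") (auto simp: P_def)
  ultimately show ?thesis
    by (intro that[of "fst \<circ> g" idx "snd \<circ> g"]) (auto simp: inf_path_def)
qed

lemma refuted_trace_progresses_finitely:
  assumes refuted: "\<And>k. refutes W R V (Ss k) (ws k)"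
    and descent: "\<And>k. trace_rank_descent W R V (rs k) (Ss k) (idx k) (ws k) (ws (Suc k))"
    and trace: "\<forall>k\<ge>k0. \<tau> k |\<in>| snd (Ss k) \<and> tstep (rs k) (idx k) (\<tau> k) (\<tau> (Suc k))"
  shows "\<not> (\<forall>m. \<exists>k\<ge>max m k0. progress (rs k) (idx k) (\<tau> k) (\<tau> (Suc k)))"
proof
  assume progress: "\<forall>m. \<exists>k\<ge>max m k0. progress (rs k) (idx k) (\<tau> k) (\<tau> (Suc k))"
  define \<mu> where "\<mu> = (\<lambda>k. LEAST j. fails W R V (\<tau> k) (ws k) j)"
  have \<mu>_le: "\<mu> k \<le> j" if "fails W R V (\<tau> k) (ws k) j" for k j
    unfolding \<mu>_def using that by (rule Least_le)
  have \<mu>: "fails W R V (\<tau> k) (ws k) (\<mu> k)" if "k \<ge> k0" for k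
  proof -
    have "\<not> sat W R V (ws k) (\<tau> k)" using refuted[of k] trace that by (auto simp: refutes_def)
    then show ?thesis unfolding \<mu>_def by (rule LeastI_ex[OF not_sat_imp_fails[OF R_worlds]])
  qed
  have dec: "\<mu> (Suc k) \<le> \<mu> k" if "k \<ge> k0" for k
  proof -
    have "tstep (rs k) (idx k) (\<tau> k) (\<tau> (Suc k))" "\<tau> k |\<in>| snd (Ss k)" using trace that by auto
    from trace_rank_descentD(1)[OF descent this \<mu>[OF that]] show ?thesis by (rule \<mu>_le)
  qed
  have strict: "\<exists>k\<ge>m. \<mu> (Suc k) < \<mu> k" if "m \<ge> k0" for m
  proof -
    obtain k where k: "k \<ge> max m k0" "progress (rs k) (idx k) (\<tau> k) (\<tau> (Suc k))"
      using progress by blast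
    then have "k \<ge> m" "k \<ge> k0" by auto
    with k(2) obtain j where "j < \<mu> k" "fails W R V (\<tau> (Suc k)) (ws (Suc k)) j"
      using trace_rank_descentD(2)[OF descent] \<mu> by blast
    then show ?thesis using \<open>k \<ge> m\<close> \<mu>_le by (meson le_less_trans)
  qed
  show False
  proof (rule no_infinite_descent_nat[of "\<lambda>k. \<mu> (k0 + k)"])
    show "\<mu> (k0 + Suc k) \<le> \<mu> (k0 + k)" for k using dec[of "k0 + k"] by simp
    show "\<exists>k\<ge>m. \<mu> (k0 + Suc k) < \<mu> (k0 + k)" for m
    proof -
      obtain k where "k \<ge> k0 + m" "\<mu> (Suc k) < \<mu> k" using strict[of "k0 + m"] by auto
      then show ?thesis by (intro exI[of _ "k - k0"]) (auto simp: Suc_diff_le)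
    qed
  qed
qed

end

theorem cprov_sound:
  assumes "cprov S" shows "valid TYPE('w) S"
  unfolding valid_def
proof (intro allI impI ballI)
  fix W :: "'w set" and R V w0
  assume model: "W \<noteq> {} \<and> (\<forall>a. R a \<subseteq> W \<times> W)" and "w0 \<in> W"
    and antecedent: "\<forall>\<phi>. \<phi> |\<in>| fst S \<longrightarrow> sat W R V w0 \<phi>"
  then have R_worlds: "\<forall>a. R a \<subseteq> W \<times> W" by blast
  show "\<exists>\<psi>. \<psi> |\<in>| snd S \<and> sat W R V w0 \<psi>"
  proof (rule ccontr)
    assume "\<not> ?thesis"
    with \<open>w0 \<in> W\<close> antecedent have root: "refutes W R V S w0" by (auto simp: refutes_def)
    obtain N rt ch sq lb cp where pp: "preproof N rt ch sq lb cp"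
      and gtc: "global_trace_condition N ch sq lb cp" and "sq rt = S"
      using assms unfolding cprov_def by blast
    with root obtain f idx ws where "inf_path N ch cp f idx"
      and refuted: "\<And>k. refutes W R V (sq (f k)) (ws k)"
      and descent: "\<And>k. trace_rank_descent W R V (lb (f k)) (sq (f k)) (idx k) (ws k) (ws (Suc k))"
      using refuting_path[OF R_worlds pp] by blast
    with gtc obtain k0 \<tau> where
      trace: "\<forall>k\<ge>k0. \<tau> k |\<in>| snd (sq (f k)) \<and> tstep (lb (f k)) (idx k) (\<tau> k) (\<tau> (Suc k))"
      and "\<forall>m. \<exists>k\<ge>max m k0. progress (lb (f k)) (idx k) (\<tau> k) (\<tau> (Suc k))"
      unfolding global_trace_condition_def by blast
    with refuted_trace_progresses_finitely[OF R_worlds refuted descent trace]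
    show False by blast
  qed
qed

lemma gprov_not_refuted:
  assumes R_worlds: "\<forall>a. R a \<subseteq> W \<times> W"
  shows "gprov S \<Longrightarrow> \<not> refutes W R V S w"
proof (induction arbitrary: w rule: gprov.induct)
  case (1 r S Ps)
  from 1(1) show ?case
  proof cases
    case gcommon
    with 1(2) show ?thesis using refutation_step_common[OF R_worlds] by (meson nth_mem)
  next
    case (StarR \<pi> \<phi> \<Gamma>)
    show ?thesis
    proof
      assume refuted: "refutes W R V S w"
      then have "w \<in> W" and \<Gamma>: "\<And>\<gamma>. \<gamma> |\<in>| \<Gamma> \<Longrightarrow> sat W R V w (Box (Star \<pi>) \<gamma>)"
        and "sat W R V w \<phi>" and "\<not> sat W R V w (Box (Star \<pi>) \<phi>)"
        using StarR by (auto simp: refutes_def simp del: sat.simps)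
      have premise: "\<not> refutes W R V (finsert \<phi> \<Gamma>, {|Box \<pi> \<phi>|}) u" for u
        using 1(2) StarR by auto
      have "sat W R V u \<phi>" if "(w, u) \<in> (rel W R V \<pi>)\<^sup>*" for u
        using that
      proof (induction rule: rtrancl_induct)
        case base
        show ?case by fact
      next
        case (step y z)
        have "y \<in> W"
          using step.hyps(1) \<open>w \<in> W\<close> rel_subset_worlds[OF R_worlds, of V \<pi>] by (auto elim: rtranclE)
        moreover have "(w, y) \<in> rel W R V (Star \<pi>)"
          using step.hyps(1) rel_Star_iff_rtrancl[OF \<open>w \<in> W\<close>] by blast
        then have "sat W R V y \<gamma>" if "\<gamma> |\<in>| \<Gamma>" for \<gamma>
          using \<Gamma>[OF that] by (simp only: sat.simps(4))
        ultimately have "sat W R V y (Box \<pi> \<phi>)"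
          using premise[of y] step.IH by (auto simp: refutes_def)
        with step.hyps(2) show ?case by simp
      qed
      moreover obtain v where "(w, v) \<in> rel W R V (Star \<pi>)" "\<not> sat W R V v \<phi>"
        using \<open>\<not> sat W R V w (Box (Star \<pi>) \<phi>)\<close> by (meson sat.simps(4))
      ultimately show False using rel_Star_iff_rtrancl[OF \<open>w \<in> W\<close>] by blast
    qed
  qed
qed

theorem gprov_sound:
  assumes "gprov S" shows "valid TYPE('w) S"
  unfolding valid_def
proof (intro allI impI ballI)
  fix W :: "'w set" and R V w
  assume "W \<noteq> {} \<and> (\<forall>a. R a \<subseteq> W \<times> W)" and "w \<in> W" and "\<forall>\<phi>. \<phi> |\<in>| fst S \<longrightarrow> sat W R V w \<phi>"
  with gprov_not_refuted[of R W, OF _ assms, of V w] show "\<exists>\<psi>. \<psi> |\<in>| snd S \<and> sat W R V w \<psi>"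
    by (auto simp: refutes_def)
qed

section \<open>Derived rules of any calculus extending the common rules\<close>

definition Neg :: "('p, 'a) fm \<Rightarrow> ('p, 'a) fm" where "Neg \<phi> = Imp \<phi> Bot"
definition Top :: "('p, 'a) fm" where "Top = Imp Bot Bot"
definition And :: "('p, 'a) fm \<Rightarrow> ('p, 'a) fm \<Rightarrow> ('p, 'a) fm" where "And \<phi> \<psi> = Neg (Imp \<phi> (Neg \<psi>))"
definition Or :: "('p, 'a) fm \<Rightarrow> ('p, 'a) fm \<Rightarrow> ('p, 'a) fm" where "Or \<phi> \<psi> = Imp (Neg \<phi>) \<psi>"

definition Conj_list :: "('p, 'a) fm list \<Rightarrow> ('p, 'a) fm" where "Conj_list xs = foldr And xs Top"
definition Disj_list :: "('p, 'a) fm list \<Rightarrow> ('p, 'a) fm" where "Disj_list xs = foldr Or xs Bot"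

definition enum_fset :: "'x fset \<Rightarrow> 'x list" where "enum_fset X = (SOME xs. fset_of_list xs = X)"

lemma fset_of_list_enum_fset [simp]: "fset_of_list (enum_fset X) = X"
  unfolding enum_fset_def by (rule someI_ex) (rule exists_fset_of_list)

lemma set_enum_fset_iff: "x \<in> set (enum_fset X) \<longleftrightarrow> x |\<in>| X"
  using fset_of_list_enum_fset[of X] by (metis fset_of_list_elem)

definition Conj :: "('p, 'a) fm fset \<Rightarrow> ('p, 'a) fm" where "Conj X = Conj_list (enum_fset X)"
definition Disj :: "('p, 'a) fm fset \<Rightarrow> ('p, 'a) fm" where "Disj X = Disj_list (enum_fset X)"

locale derivable =
  fixes P :: "('p, 'a) seq \<Rightarrow> bool"
  assumes rule_closed: "\<And>r S Ps. common r S Ps \<Longrightarrow> (\<And>Q. Q \<in> set Ps \<Longrightarrow> P Q) \<Longrightarrow> P S"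
    and star_induction: "\<And>\<chi> \<pi>. P ({|\<chi>|}, {|Box \<pi> \<chi>|}) \<Longrightarrow> P ({|\<chi>|}, {|Box (Star \<pi>) \<chi>|})"
begin

lemma ax: "\<phi> |\<in>| \<Gamma> \<Longrightarrow> \<phi> |\<in>| \<Delta> \<Longrightarrow> P (\<Gamma>, \<Delta>)"
  by (rule rule_closed[OF common.Ax]) auto

lemma botL: "Bot |\<in>| \<Gamma> \<Longrightarrow> P (\<Gamma>, \<Delta>)"
proof -
  assume "Bot |\<in>| \<Gamma>"
  then have "finsert Bot \<Gamma> = \<Gamma>" by auto
  moreover have "P (finsert Bot \<Gamma>, \<Delta>)" by (rule rule_closed[OF common.BotL]) simp
  ultimately show ?thesis by simp
qed

lemma wk: "P (\<Gamma>, \<Delta>) \<Longrightarrow> \<Gamma> |\<subseteq>| \<Gamma>' \<Longrightarrow> \<Delta> |\<subseteq>| \<Delta>' \<Longrightarrow> P (\<Gamma>', \<Delta>')"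
  by (rule rule_closed[OF common.Wk]) auto

lemma cut: "P (\<Gamma>, finsert \<phi> \<Delta>) \<Longrightarrow> P (finsert \<phi> \<Gamma>, \<Delta>) \<Longrightarrow> P (\<Gamma>, \<Delta>)"
  by (rule rule_closed[OF common.Cut]) auto

lemma impL: "P (\<Gamma>, finsert \<phi> \<Delta>) \<Longrightarrow> P (finsert \<psi> \<Gamma>, \<Delta>) \<Longrightarrow> P (finsert (Imp \<phi> \<psi>) \<Gamma>, \<Delta>)"
  by (rule rule_closed[OF common.ImpL]) auto

lemma impL_mem: "Imp \<phi> \<psi> |\<in>| \<Gamma> \<Longrightarrow> P (\<Gamma>, finsert \<phi> \<Delta>) \<Longrightarrow> P (finsert \<psi> \<Gamma>, \<Delta>) \<Longrightarrow> P (\<Gamma>, \<Delta>)"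
  using impL[of \<Gamma> \<phi> \<Delta> \<psi>] by (simp add: finsert_absorb)

lemma impR: "P (finsert \<phi> \<Gamma>, finsert \<psi> \<Delta>) \<Longrightarrow> P (\<Gamma>, finsert (Imp \<phi> \<psi>) \<Delta>)"
  by (rule rule_closed[OF common.ImpR]) auto

lemma boxR: "P (\<Gamma>, finsert \<phi> (BoxC \<pi> |`| \<Delta>)) \<Longrightarrow> P (Box \<pi> |`| \<Gamma>, finsert (Box \<pi> \<phi>) \<Delta>)"
  by (rule rule_closed[OF common.BoxR]) auto

lemma boxCR: "P (\<Gamma>, finsert \<phi> (Box \<pi> |`| \<Delta>)) \<Longrightarrow> P (BoxC \<pi> |`| \<Gamma>, finsert (BoxC \<pi> \<phi>) \<Delta>)"
  by (rule rule_closed[OF common.BoxCR]) auto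

lemma sqL_mem: "Box (Sq \<pi>0 \<pi>1) \<phi> |\<in>| \<Gamma> \<Longrightarrow> P (finsert (Box \<pi>0 (Box \<pi>1 \<phi>)) \<Gamma>, \<Delta>) \<Longrightarrow> P (\<Gamma>, \<Delta>)"
  using rule_closed[OF common.SqL[of \<pi>0 \<pi>1 \<phi> \<Gamma> \<Delta>]] by (simp add: finsert_absorb)

lemma sqR: "P (\<Gamma>, finsert (Box \<pi>0 (Box \<pi>1 \<phi>)) \<Delta>) \<Longrightarrow> P (\<Gamma>, finsert (Box (Sq \<pi>0 \<pi>1) \<phi>) \<Delta>)"
  by (rule rule_closed[OF common.SqR]) auto

lemma chL_mem: "Box (Ch \<pi>0 \<pi>1) \<phi> |\<in>| \<Gamma> \<Longrightarrow> P (finsert (Box \<pi>0 \<phi>) (finsert (Box \<pi>1 \<phi>) \<Gamma>), \<Delta>) \<Longrightarrow> P (\<Gamma>, \<Delta>)"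
  using rule_closed[OF common.ChL[of \<pi>0 \<pi>1 \<phi> \<Gamma> \<Delta>]] by (simp add: finsert_absorb)

lemma chR: "P (\<Gamma>, finsert (Box \<pi>0 \<phi>) \<Delta>) \<Longrightarrow> P (\<Gamma>, finsert (Box \<pi>1 \<phi>) \<Delta>) \<Longrightarrow> P (\<Gamma>, finsert (Box (Ch \<pi>0 \<pi>1) \<phi>) \<Delta>)"
  by (rule rule_closed[OF common.ChR]) auto

lemma starL_mem: "Box (Star \<pi>) \<phi> |\<in>| \<Gamma> \<Longrightarrow> P (finsert \<phi> (finsert (Box \<pi> (Box (Star \<pi>) \<phi>)) \<Gamma>), \<Delta>) \<Longrightarrow> P (\<Gamma>, \<Delta>)"
  using rule_closed[OF common.StarL[of \<pi> \<phi> \<Gamma> \<Delta>]] by (simp add: finsert_absorb)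

lemma testL_mem: "Box (Test \<psi>) \<phi> |\<in>| \<Gamma> \<Longrightarrow> P (\<Gamma>, finsert \<psi> \<Delta>) \<Longrightarrow> P (finsert \<phi> \<Gamma>, \<Delta>) \<Longrightarrow> P (\<Gamma>, \<Delta>)"
proof -
  assume m: "Box (Test \<psi>) \<phi> |\<in>| \<Gamma>" and p: "P (\<Gamma>, finsert \<psi> \<Delta>)" "P (finsert \<phi> \<Gamma>, \<Delta>)"
  have "P (finsert (Box (Test \<psi>) \<phi>) \<Gamma>, \<Delta>)" by (rule rule_closed[OF common.TestL]) (use p in auto)
  then show ?thesis using m by (simp add: finsert_absorb)
qed

lemma testR: "P (finsert \<psi> \<Gamma>, finsert \<phi> \<Delta>) \<Longrightarrow> P (\<Gamma>, finsert (Box (Test \<psi>) \<phi>) \<Delta>)"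
  by (rule rule_closed[OF common.TestR]) auto

lemma negL: "P (\<Gamma>, finsert \<phi> \<Delta>) \<Longrightarrow> P (finsert (Neg \<phi>) \<Gamma>, \<Delta>)"
  unfolding Neg_def by (rule impL) (auto intro: botL)

lemma negR: "P (finsert \<phi> \<Gamma>, \<Delta>) \<Longrightarrow> P (\<Gamma>, finsert (Neg \<phi>) \<Delta>)"
  unfolding Neg_def by (rule impR) (erule wk, auto)

lemma negL_mem: "Neg \<phi> |\<in>| \<Gamma> \<Longrightarrow> P (\<Gamma>, finsert \<phi> \<Delta>) \<Longrightarrow> P (\<Gamma>, \<Delta>)"
  using negL[of \<Gamma> \<phi> \<Delta>] by (simp add: finsert_absorb)

lemma andL: "P (finsert \<phi> (finsert \<psi> \<Gamma>), \<Delta>) \<Longrightarrow> P (finsert (And \<phi> \<psi>) \<Gamma>, \<Delta>)"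
  unfolding And_def by (intro negL impR negR) (erule wk, auto)

lemma andR: "P (\<Gamma>, finsert \<phi> \<Delta>) \<Longrightarrow> P (\<Gamma>, finsert \<psi> \<Delta>) \<Longrightarrow> P (\<Gamma>, finsert (And \<phi> \<psi>) \<Delta>)"
  unfolding And_def by (intro negR impL negL) auto

lemma orL: "P (finsert \<phi> \<Gamma>, \<Delta>) \<Longrightarrow> P (finsert \<psi> \<Gamma>, \<Delta>) \<Longrightarrow> P (finsert (Or \<phi> \<psi>) \<Gamma>, \<Delta>)"
  unfolding Or_def by (intro impL negR) auto

lemma orR: "P (\<Gamma>, finsert \<phi> (finsert \<psi> \<Delta>)) \<Longrightarrow> P (\<Gamma>, finsert (Or \<phi> \<psi>) \<Delta>)"
  unfolding Or_def by (intro impR negL) auto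

lemma topR: "P (\<Gamma>, finsert Top \<Delta>)"
  unfolding Top_def by (intro impR botL) auto

lemma Conj_list_L: "P (fset_of_list xs |\<union>| \<Gamma>, \<Delta>) \<Longrightarrow> P (finsert (Conj_list xs) \<Gamma>, \<Delta>)"
proof (induction xs arbitrary: \<Gamma>)
  case Nil then show ?case by (auto simp: Conj_list_def elim: wk)
next
  case (Cons x xs)
  have "P (finsert (Conj_list xs) (finsert x \<Gamma>), \<Delta>)" using Cons.prems by (intro Cons.IH) (auto elim: wk)
  then have "P (finsert x (finsert (Conj_list xs) \<Gamma>), \<Delta>)" by (auto elim: wk)
  then show ?case unfolding Conj_list_def by simp (rule andL, simp add: Conj_list_def)
qed

lemma Conj_list_R: "(\<And>x. x \<in> set xs \<Longrightarrow> P (\<Gamma>, finsert x \<Delta>)) \<Longrightarrow> P (\<Gamma>, finsert (Conj_list xs) \<Delta>)"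
proof (induction xs)
  case Nil then show ?case by (simp add: Conj_list_def topR)
next
  case (Cons x xs)
  then show ?case unfolding Conj_list_def by simp (rule andR, auto simp: Conj_list_def)
qed

lemma Disj_list_R: "P (\<Gamma>, fset_of_list xs |\<union>| \<Delta>) \<Longrightarrow> P (\<Gamma>, finsert (Disj_list xs) \<Delta>)"
proof (induction xs arbitrary: \<Delta>)
  case Nil then show ?case by (auto simp: Disj_list_def elim: wk)
next
  case (Cons x xs)
  have "P (\<Gamma>, finsert (Disj_list xs) (finsert x \<Delta>))" using Cons.prems by (intro Cons.IH) (auto elim: wk)
  then have "P (\<Gamma>, finsert x (finsert (Disj_list xs) \<Delta>))" by (auto elim: wk)
  then show ?case unfolding Disj_list_def by simp (rule orR, simp add: Disj_list_def)
qed

lemma Disj_list_L: "(\<And>x. x \<in> set xs \<Longrightarrow> P (finsert x \<Gamma>, \<Delta>)) \<Longrightarrow> P (finsert (Disj_list xs) \<Gamma>, \<Delta>)"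
proof (induction xs)
  case Nil then show ?case by (simp add: Disj_list_def botL)
next
  case (Cons x xs)
  then show ?case unfolding Disj_list_def by simp (rule orL, auto simp: Disj_list_def)
qed

lemma ConjL: "P (X |\<union>| \<Gamma>, \<Delta>) \<Longrightarrow> P (finsert (Conj X) \<Gamma>, \<Delta>)"
  unfolding Conj_def by (rule Conj_list_L) simp

lemma ConjR: "(\<And>x. x |\<in>| X \<Longrightarrow> P (\<Gamma>, finsert x \<Delta>)) \<Longrightarrow> P (\<Gamma>, finsert (Conj X) \<Delta>)"
  unfolding Conj_def by (rule Conj_list_R) (simp add: set_enum_fset_iff)

lemma DisjR: "P (\<Gamma>, X |\<union>| \<Delta>) \<Longrightarrow> P (\<Gamma>, finsert (Disj X) \<Delta>)"
  unfolding Disj_def by (rule Disj_list_R) simp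

lemma DisjL: "(\<And>x. x |\<in>| X \<Longrightarrow> P (finsert x \<Gamma>, \<Delta>)) \<Longrightarrow> P (finsert (Disj X) \<Gamma>, \<Delta>)"
  unfolding Disj_def by (rule Disj_list_L) (simp add: set_enum_fset_iff)

lemma multicut: "(\<And>\<sigma>. \<sigma> |\<in>| \<Sigma> \<Longrightarrow> P (\<Gamma>, finsert \<sigma> \<Delta>)) \<Longrightarrow> P (\<Sigma> |\<union>| \<Gamma>, \<Delta>) \<Longrightarrow> P (\<Gamma>, \<Delta>)"
proof (induction \<Sigma> arbitrary: \<Gamma> rule: fset_induct)
  case empty then show ?case by simp
next
  case (insert x S)
  have "P (finsert x \<Gamma>, \<Delta>)"
  proof (rule insert.IH)
    show "P (finsert x \<Gamma>, finsert \<sigma> \<Delta>)" if "\<sigma> |\<in>| S" for \<sigma> using insert.prems(1)[of \<sigma>] that by (auto elim: wk)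
    show "P (S |\<union>| finsert x \<Gamma>, \<Delta>)" using insert.prems(2) by (auto elim: wk)
  qed
  then show ?case using insert.prems(1)[of x] by (auto intro: cut)
qed

lemma negsL: "P (\<Gamma>, X |\<union>| \<Delta>) \<Longrightarrow> P (Neg |`| X |\<union>| \<Gamma>, \<Delta>)"
proof (induction X arbitrary: \<Delta> rule: fset_induct)
  case empty then show ?case by simp
next
  case (insert x X)
  have "P (Neg |`| X |\<union>| \<Gamma>, finsert x \<Delta>)" using insert.prems by (intro insert.IH) (auto elim: wk)
  then have "P (finsert (Neg x) (Neg |`| X |\<union>| \<Gamma>), \<Delta>)" by (rule negL)
  then show ?case by (auto elim: wk)
qed

lemma subset_split: "(\<And>A. A |\<subseteq>| X \<Longrightarrow> P (A |\<union>| \<Gamma>, (X |-| A) |\<union>| \<Delta>)) \<Longrightarrow> P (\<Gamma>, \<Delta>)"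
proof (induction X arbitrary: \<Gamma> \<Delta> rule: fset_induct_stronger)
  case empty
  then show ?case using empty[of "{||}"] by simp
next
  case (insert x X)
  have 1: "P (\<Gamma>, finsert x \<Delta>)"
  proof (rule insert.IH)
    fix A assume A: "A |\<subseteq>| X"
    then have "P (A |\<union>| \<Gamma>, (finsert x X |-| A) |\<union>| \<Delta>)" using insert.prems by auto
    moreover have "(finsert x X |-| A) |\<union>| \<Delta> |\<subseteq>| (X |-| A) |\<union>| finsert x \<Delta>" by auto
    ultimately show "P (A |\<union>| \<Gamma>, (X |-| A) |\<union>| finsert x \<Delta>)" by (auto elim: wk)
  qed
  have 2: "P (finsert x \<Gamma>, \<Delta>)"
  proof (rule insert.IH)
    fix A assume A: "A |\<subseteq>| X"
    then have "finsert x A |\<subseteq>| finsert x X" by auto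
    then have "P (finsert x A |\<union>| \<Gamma>, (finsert x X |-| finsert x A) |\<union>| \<Delta>)" by (rule insert.prems)
    moreover have "(finsert x X |-| finsert x A) |\<union>| \<Delta> |\<subseteq>| (X |-| A) |\<union>| \<Delta>" by auto
    ultimately show "P (A |\<union>| finsert x \<Gamma>, (X |-| A) |\<union>| \<Delta>)" by (auto elim: wk)
  qed
  from 1 2 show ?case by (rule cut)
qed

end

section \<open>The canonical model\<close>

(* For [\<pi>]\<^sup>\<leftarrow>\<phi> it also contains [\<pi>]\<not>[\<pi>]\<^sup>\<leftarrow>\<phi>, the formula through which the
   canonical model sees that the converse box looks back along the same relation. *)
fun FL :: "('p, 'a) fm \<Rightarrow> ('p, 'a) fm set"
  and FL_box :: "('p, 'a) pg \<Rightarrow> ('p, 'a) fm \<Rightarrow> ('p, 'a) fm set" where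
  "FL Bot = {Bot}"
| "FL (Var p) = {Var p}"
| "FL (Imp \<phi> \<psi>) = insert (Imp \<phi> \<psi>) (FL \<phi> \<union> FL \<psi>)"
| "FL (Box \<pi> \<phi>) = FL_box \<pi> \<phi> \<union> FL \<phi>"
| "FL (BoxC \<pi> \<phi>) =
     {BoxC \<pi> \<phi>, Imp (BoxC \<pi> \<phi>) Bot, Bot} \<union> FL \<phi> \<union> FL_box \<pi> (Imp (BoxC \<pi> \<phi>) Bot)"
| "FL_box (At a) \<phi> = {Box (At a) \<phi>}"
| "FL_box (Sq \<pi>0 \<pi>1) \<phi> = insert (Box (Sq \<pi>0 \<pi>1) \<phi>) (FL_box \<pi>0 (Box \<pi>1 \<phi>) \<union> FL_box \<pi>1 \<phi>)"
| "FL_box (Ch \<pi>0 \<pi>1) \<phi> = insert (Box (Ch \<pi>0 \<pi>1) \<phi>) (FL_box \<pi>0 \<phi> \<union> FL_box \<pi>1 \<phi>)"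
| "FL_box (Star \<pi>) \<phi> = insert (Box (Star \<pi>) \<phi>) (FL_box \<pi> (Box (Star \<pi>) \<phi>))"
| "FL_box (Test \<psi>) \<phi> = insert (Box (Test \<psi>) \<phi>) (FL \<psi>)"

lemma FL_box_self: "Box \<pi> \<phi> \<in> FL_box \<pi> \<phi>"
  by (cases \<pi>) auto

lemma FL_self: "\<theta> \<in> FL \<theta>"
  by (cases \<theta>) (auto simp: FL_box_self)

lemma finite_FL: "finite (FL \<theta>)"
  by (induction \<theta> rule: fm.induct[where ?P2.0 = "\<lambda>\<pi>. \<forall>\<phi>. finite (FL_box \<pi> \<phi>)"]) auto

lemma FL_closed_all: "\<forall>y\<in>FL \<theta>. FL y \<subseteq> FL \<theta>"
proof (induction \<theta> rule: fm.induct[where ?P2.0 = "\<lambda>\<pi>. \<forall>\<phi>. \<forall>y\<in>FL_box \<pi> \<phi>. FL y \<subseteq> FL_box \<pi> \<phi> \<union> FL \<phi>"])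
  case (BoxC \<pi> \<phi>)
  have IH: "\<forall>\<phi>. \<forall>y\<in>FL_box \<pi> \<phi>. FL y \<subseteq> FL_box \<pi> \<phi> \<union> FL \<phi>" "\<forall>y\<in>FL \<phi>. FL y \<subseteq> FL \<phi>" using BoxC by blast+
  let ?n = "Imp (BoxC \<pi> \<phi>) Bot"
  have e: "FL (BoxC \<pi> \<phi>) = {BoxC \<pi> \<phi>, ?n, Bot} \<union> FL \<phi> \<union> FL_box \<pi> ?n" by simp
  have n: "FL ?n = insert ?n (FL (BoxC \<pi> \<phi>) \<union> {Bot})" by (simp only: FL.simps)
  show ?case
  proof
    fix y assume y: "y \<in> FL (BoxC \<pi> \<phi>)"
    have "y = BoxC \<pi> \<phi> \<or> y = ?n \<or> y = Bot \<or> y \<in> FL \<phi> \<or> y \<in> FL_box \<pi> ?n" using y e by blast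
    then show "FL y \<subseteq> FL (BoxC \<pi> \<phi>)"
    proof (elim disjE)
      assume "y = ?n" then show ?thesis using n e by auto
    next
      assume "y \<in> FL_box \<pi> ?n"
      then have "FL y \<subseteq> FL_box \<pi> ?n \<union> FL ?n" using IH(1) by blast
      then show ?thesis using n e by auto
    next
      assume "y \<in> FL \<phi>" then show ?thesis using IH(2) e by blast
    qed (use e in auto)
  qed
next
  case (Sq \<pi>0 \<pi>1)
  show ?case
  proof (intro allI ballI)
    fix \<phi> y assume y: "y \<in> FL_box (Sq \<pi>0 \<pi>1) \<phi>"
    have A: "y \<in> FL_box \<pi>0 (Box \<pi>1 \<phi>) \<Longrightarrow> FL y \<subseteq> FL_box \<pi>0 (Box \<pi>1 \<phi>) \<union> FL (Box \<pi>1 \<phi>)" using Sq(1) by blast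
    have B: "y \<in> FL_box \<pi>1 \<phi> \<Longrightarrow> FL y \<subseteq> FL_box \<pi>1 \<phi> \<union> FL \<phi>" using Sq(2) by blast
    show "FL y \<subseteq> FL_box (Sq \<pi>0 \<pi>1) \<phi> \<union> FL \<phi>" using y A B by auto
  qed
next
  case (Ch \<pi>0 \<pi>1)
  show ?case
  proof (intro allI ballI)
    fix \<phi> y assume y: "y \<in> FL_box (Ch \<pi>0 \<pi>1) \<phi>"
    have A: "y \<in> FL_box \<pi>0 \<phi> \<Longrightarrow> FL y \<subseteq> FL_box \<pi>0 \<phi> \<union> FL \<phi>" using Ch(1) by blast
    have B: "y \<in> FL_box \<pi>1 \<phi> \<Longrightarrow> FL y \<subseteq> FL_box \<pi>1 \<phi> \<union> FL \<phi>" using Ch(2) by blast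
    show "FL y \<subseteq> FL_box (Ch \<pi>0 \<pi>1) \<phi> \<union> FL \<phi>" using y A B by auto
  qed
next
  case (Star \<pi>)
  show ?case
  proof (intro allI ballI)
    fix \<phi> y assume y: "y \<in> FL_box (Star \<pi>) \<phi>"
    have A: "y \<in> FL_box \<pi> (Box (Star \<pi>) \<phi>) \<Longrightarrow> FL y \<subseteq> FL_box \<pi> (Box (Star \<pi>) \<phi>) \<union> FL (Box (Star \<pi>) \<phi>)" using Star(1) by blast
    show "FL y \<subseteq> FL_box (Star \<pi>) \<phi> \<union> FL \<phi>" using y A by auto
  qed
qed auto

lemma FL_closed: "\<psi> \<in> FL \<theta> \<Longrightarrow> FL \<psi> \<subseteq> FL \<theta>"
  using FL_closed_all by blast

locale canonical_model = derivable P for P :: "('p, 'a) seq \<Rightarrow> bool" +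
  fixes C :: "('p, 'a) fm fset"
  assumes C_closed: "\<And>y. y |\<in>| C \<Longrightarrow> FL y \<subseteq> fset C"
begin

lemma C_FL: "y |\<in>| C \<Longrightarrow> x \<in> FL y \<Longrightarrow> x |\<in>| C"
  using C_closed by blast

lemma C_Imp: "Imp \<phi> \<psi> |\<in>| C \<Longrightarrow> \<phi> |\<in>| C \<and> \<psi> |\<in>| C"
  using C_FL[of "Imp \<phi> \<psi>" \<phi>] C_FL[of "Imp \<phi> \<psi>" \<psi>] FL_self[of \<phi>] FL_self[of \<psi>] by auto

lemma C_Box: "Box \<pi> \<phi> |\<in>| C \<Longrightarrow> \<phi> |\<in>| C"
  using C_FL[of "Box \<pi> \<phi>" \<phi>] FL_self[of \<phi>] by auto

lemma C_BoxC: "BoxC \<pi> \<phi> |\<in>| C \<Longrightarrow> \<phi> |\<in>| C \<and> Bot |\<in>| C \<and> Box \<pi> (Neg (BoxC \<pi> \<phi>)) |\<in>| C \<and> Neg (BoxC \<pi> \<phi>) |\<in>| C"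
  using C_FL[of "BoxC \<pi> \<phi>"] FL_self[of \<phi>] FL_box_self[of \<pi> "Neg (BoxC \<pi> \<phi>)"]
  by (auto simp: Neg_def)

lemma C_Sq: "Box (Sq \<pi>0 \<pi>1) \<phi> |\<in>| C \<Longrightarrow> Box \<pi>0 (Box \<pi>1 \<phi>) |\<in>| C \<and> Box \<pi>1 \<phi> |\<in>| C"
  using C_FL[of "Box (Sq \<pi>0 \<pi>1) \<phi>"] FL_box_self[of \<pi>0 "Box \<pi>1 \<phi>"] FL_box_self[of \<pi>1 \<phi>] by auto

lemma C_Ch: "Box (Ch \<pi>0 \<pi>1) \<phi> |\<in>| C \<Longrightarrow> Box \<pi>0 \<phi> |\<in>| C \<and> Box \<pi>1 \<phi> |\<in>| C"
  using C_FL[of "Box (Ch \<pi>0 \<pi>1) \<phi>"] FL_box_self[of \<pi>0 \<phi>] FL_box_self[of \<pi>1 \<phi>] by auto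

lemma C_Star: "Box (Star \<pi>) \<phi> |\<in>| C \<Longrightarrow> Box \<pi> (Box (Star \<pi>) \<phi>) |\<in>| C"
  using C_FL[of "Box (Star \<pi>) \<phi>"] FL_box_self[of \<pi> "Box (Star \<pi>) \<phi>"] by auto

lemma C_Test: "Box (Test \<psi>) \<phi> |\<in>| C \<Longrightarrow> \<psi> |\<in>| C"
  using C_FL[of "Box (Test \<psi>) \<phi>"] FL_self[of \<psi>] by auto

definition atom :: "('p, 'a) fm fset \<Rightarrow> bool" where "atom A \<longleftrightarrow> A |\<subseteq>| C \<and> \<not> P (A, C |-| A)"
definition char_fm :: "('p, 'a) fm fset \<Rightarrow> ('p, 'a) fm" where "char_fm A = Conj (A |\<union>| Neg |`| (C |-| A))"
(* compatible \<pi> A B: the calculus does not rule out B as a \<pi>-successor of A.  It is the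
   canonical relation of atomic programs. *)
definition compatible :: "('p, 'a) pg \<Rightarrow> ('p, 'a) fm fset \<Rightarrow> ('p, 'a) fm fset \<Rightarrow> bool" where
  "compatible \<pi> A B \<longleftrightarrow> \<not> P (A, finsert (Box \<pi> (Neg (char_fm B))) (C |-| A))"
definition atoms :: "('p, 'a) fm fset fset" where "atoms = ffilter atom (fPow C)"

lemma atoms_iff: "A |\<in>| atoms \<longleftrightarrow> atom A"
  unfolding atoms_def atom_def by auto

lemma char_fmL: "A |\<subseteq>| C \<Longrightarrow> P (A |\<union>| \<Gamma>, (C |-| A) |\<union>| \<Delta>) \<Longrightarrow> P (finsert (char_fm A) \<Gamma>, \<Delta>)"
proof -
  assume h: "P (A |\<union>| \<Gamma>, (C |-| A) |\<union>| \<Delta>)"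
  have "P (Neg |`| (C |-| A) |\<union>| (A |\<union>| \<Gamma>), \<Delta>)" by (rule negsL) (rule h)
  then have "P ((A |\<union>| Neg |`| (C |-| A)) |\<union>| \<Gamma>, \<Delta>)" by (auto elim: wk)
  then show ?thesis unfolding char_fm_def by (rule ConjL)
qed

lemma char_fmR: "A |\<subseteq>| \<Gamma> \<Longrightarrow> C |-| A |\<subseteq>| \<Delta> \<Longrightarrow> P (\<Gamma>, finsert (char_fm A) \<Delta>)"
  unfolding char_fm_def
proof (rule ConjR)
  fix x assume A: "A |\<subseteq>| \<Gamma>" and D: "C |-| A |\<subseteq>| \<Delta>" and x: "x |\<in>| A |\<union>| Neg |`| (C |-| A)"
  show "P (\<Gamma>, finsert x \<Delta>)"
  proof (cases "x |\<in>| A")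
    case True then show ?thesis using A by (intro ax[of x]) auto
  next
    case False
    then obtain e where e: "x = Neg e" "e |\<in>| C |-| A" using x by auto
    have "P (finsert e \<Gamma>, \<Delta>)" using e D by (intro ax[of e]) auto
    then show ?thesis using e by (simp add: negR)
  qed
qed

lemma atom_consistent: "atom A \<Longrightarrow> P (\<Gamma>, \<Delta>) \<Longrightarrow> \<Gamma> |\<subseteq>| A \<Longrightarrow> \<Delta> |\<subseteq>| C |-| A \<Longrightarrow> False"
  unfolding atom_def by (meson wk)

lemma atom_excludes: "atom A \<Longrightarrow> x |\<in>| C \<Longrightarrow> x |\<notin>| A \<Longrightarrow> P (\<Gamma>, finsert x \<Delta>) \<Longrightarrow> \<Gamma> |\<subseteq>| A \<Longrightarrow> \<Delta> |\<subseteq>| C |-| A \<Longrightarrow> False"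
  using atom_consistent[of A \<Gamma> "finsert x \<Delta>"] by auto

lemma atom_split: "(\<And>A. atom A \<Longrightarrow> P (A |\<union>| \<Gamma>, (C |-| A) |\<union>| \<Delta>)) \<Longrightarrow> P (\<Gamma>, \<Delta>)"
proof (rule subset_split[of C])
  fix A assume h: "\<And>A. atom A \<Longrightarrow> P (A |\<union>| \<Gamma>, (C |-| A) |\<union>| \<Delta>)" and A: "A |\<subseteq>| C"
  show "P (A |\<union>| \<Gamma>, (C |-| A) |\<union>| \<Delta>)"
  proof (cases "atom A")
    case True then show ?thesis by (rule h)
  next
    case False
    then have "P (A, C |-| A)" using A unfolding atom_def by blast
    then show ?thesis by (auto elim: wk)
  qed
qed

lemma lindenbaum:
  assumes "\<Gamma> |\<subseteq>| C" "\<Delta> |\<subseteq>| C" "\<not> P (\<Gamma>, \<Delta>)"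
  shows "\<exists>A. atom A \<and> \<Gamma> |\<subseteq>| A \<and> \<Delta> |\<subseteq>| C |-| A"
proof (rule ccontr)
  assume n: "\<not> ?thesis"
  have "P (\<Gamma>, \<Delta>)"
  proof (rule atom_split)
    fix A assume A: "atom A"
    show "P (A |\<union>| \<Gamma>, (C |-| A) |\<union>| \<Delta>)"
    proof (cases "\<Gamma> |\<subseteq>| A \<and> \<Delta> |\<subseteq>| C |-| A")
      case True then show ?thesis using n A by blast
    next
      case False
      then obtain x where "(x |\<in>| \<Gamma> \<and> x |\<notin>| A) \<or> (x |\<in>| \<Delta> \<and> x |\<in>| A)" using assms(2) by blast
      then show ?thesis using assms(1,2) by (elim disjE) (rule ax[of x]; auto)+
    qed
  qed
  then show False using assms(3) by blast
qed

lemma distinct_atoms: "atom A \<Longrightarrow> atom B \<Longrightarrow> A \<noteq> B \<Longrightarrow> A |\<subseteq>| \<Gamma> \<Longrightarrow> B |\<subseteq>| \<Gamma> \<Longrightarrow> C |-| A |\<subseteq>| \<Delta> \<Longrightarrow> C |-| B |\<subseteq>| \<Delta> \<Longrightarrow> P (\<Gamma>, \<Delta>)"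
proof -
  assume a: "atom A" "atom B" "A \<noteq> B" "A |\<subseteq>| \<Gamma>" "B |\<subseteq>| \<Gamma>" "C |-| A |\<subseteq>| \<Delta>" "C |-| B |\<subseteq>| \<Delta>"
  then have s: "A |\<subseteq>| C" "B |\<subseteq>| C" unfolding atom_def by auto
  from a(3) obtain x where "(x |\<in>| A \<and> x |\<notin>| B) \<or> (x |\<in>| B \<and> x |\<notin>| A)" by blast
  then show ?thesis using a s by (elim disjE) (rule ax[of x]; auto)+
qed

lemma atom_Bot: "atom A \<Longrightarrow> Bot |\<notin>| A"
  using atom_consistent botL[of A "C |-| A"] by blast

lemma atom_Imp:
  assumes A: "atom A" and c: "Imp \<phi> \<psi> |\<in>| C"
  shows "Imp \<phi> \<psi> |\<in>| A \<longleftrightarrow> (\<phi> |\<in>| A \<longrightarrow> \<psi> |\<in>| A)"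
proof
  assume imp: "Imp \<phi> \<psi> |\<in>| A"
  show "\<phi> |\<in>| A \<longrightarrow> \<psi> |\<in>| A"
  proof (rule impI, rule ccontr)
    assume "\<phi> |\<in>| A" "\<psi> |\<notin>| A"
    have "P (A, C |-| A)"
      by (rule impL_mem[OF imp]) (use \<open>\<phi> |\<in>| A\<close> \<open>\<psi> |\<notin>| A\<close> C_Imp[OF c] in \<open>auto intro: ax\<close>)
    then show False using A atom_consistent by blast
  qed
next
  assume h: "\<phi> |\<in>| A \<longrightarrow> \<psi> |\<in>| A"
  show "Imp \<phi> \<psi> |\<in>| A"
  proof (rule ccontr)
    assume n: "Imp \<phi> \<psi> |\<notin>| A"
    have "P (finsert \<phi> A, finsert \<psi> (C |-| A))"
      using h C_Imp[OF c] by (cases "\<phi> |\<in>| A") (auto intro: ax)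
    then have "P (A, finsert (Imp \<phi> \<psi>) (C |-| A))" by (rule impR)
    then show False using atom_excludes[OF A c n] by blast
  qed
qed

lemma atom_Sq: assumes A: "atom A" and c: "Box (Sq \<pi>0 \<pi>1) \<phi> |\<in>| C" and i: "Box (Sq \<pi>0 \<pi>1) \<phi> |\<in>| A"
  shows "Box \<pi>0 (Box \<pi>1 \<phi>) |\<in>| A"
proof (rule ccontr)
  assume n: "Box \<pi>0 (Box \<pi>1 \<phi>) |\<notin>| A"
  have "P (A, C |-| A)" by (rule sqL_mem[OF i]) (use n C_Sq[OF c] in \<open>auto intro: ax\<close>)
  then show False using A atom_consistent by blast
qed

lemma atom_Ch: assumes A: "atom A" and c: "Box (Ch \<pi>0 \<pi>1) \<phi> |\<in>| C" and i: "Box (Ch \<pi>0 \<pi>1) \<phi> |\<in>| A"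
  shows "Box \<pi>0 \<phi> |\<in>| A \<and> Box \<pi>1 \<phi> |\<in>| A"
proof (rule ccontr)
  assume n: "\<not> ?thesis"
  have "P (A, C |-| A)" by (rule chL_mem[OF i]) (use n C_Ch[OF c] in \<open>auto intro: ax\<close>)
  then show False using A atom_consistent by blast
qed

lemma atom_Star: assumes A: "atom A" and c: "Box (Star \<pi>) \<phi> |\<in>| C" and i: "Box (Star \<pi>) \<phi> |\<in>| A"
  shows "\<phi> |\<in>| A \<and> Box \<pi> (Box (Star \<pi>) \<phi>) |\<in>| A"
proof (rule ccontr)
  assume n: "\<not> ?thesis"
  have "P (A, C |-| A)" by (rule starL_mem[OF i]) (use n C_Star[OF c] C_Box[OF c] in \<open>auto intro: ax\<close>)
  then show False using A atom_consistent by blast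
qed

lemma atom_Test: assumes A: "atom A" and c: "Box (Test \<psi>) \<phi> |\<in>| C" and i: "Box (Test \<psi>) \<phi> |\<in>| A"
  and p: "\<psi> |\<in>| A" shows "\<phi> |\<in>| A"
proof (rule ccontr)
  assume n: "\<not> ?thesis"
  have "P (A, C |-| A)" by (rule testL_mem[OF i]) (use n p C_Box[OF c] in \<open>auto intro: ax\<close>)
  then show False using A atom_consistent by blast
qed

definition CW :: "('p, 'a) fm fset set" where "CW = {A. atom A}"
definition CR :: "'a \<Rightarrow> (('p, 'a) fm fset \<times> ('p, 'a) fm fset) set" where
  "CR a = {(A, B). atom A \<and> atom B \<and> compatible (At a) A B}"
definition CV :: "('p, 'a) fm fset \<Rightarrow> 'p set" where "CV A = {p. Var p |\<in>| A}"

abbreviation csat where "csat \<equiv> sat CW CR CV"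
abbreviation crel where "crel \<equiv> rel CW CR CV"

lemma CR_worlds: "\<forall>a. CR a \<subseteq> CW \<times> CW"
  unfolding CR_def CW_def by auto

lemma crel_atoms: "(A,B) \<in> crel \<pi> \<Longrightarrow> atom A \<and> atom B"
  using rel_subset_worlds[OF CR_worlds, of CV \<pi>] unfolding CW_def by blast

lemma neg_char_split:
  assumes "\<And>E. atom E \<Longrightarrow> E |\<notin>| Z \<Longrightarrow> P (E, finsert \<phi> (C |-| E))"
  shows "P (Neg |`| char_fm |`| Z, {|\<phi>|})"
proof (rule atom_split)
  fix E assume E: "atom E"
  show "P (E |\<union>| Neg |`| char_fm |`| Z, (C |-| E) |\<union>| {|\<phi>|})"
  proof (cases "E |\<in>| Z")
    case True
    then have m: "Neg (char_fm E) |\<in>| E |\<union>| Neg |`| char_fm |`| Z" by auto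
    show ?thesis by (rule negL_mem[OF m]) (rule char_fmR, auto)
  next
    case False
    then show ?thesis using assms[OF E] by (auto elim: wk)
  qed
qed

lemma boxR_lift:
  assumes h1: "\<And>B. B |\<in>| Z \<Longrightarrow> P (A, finsert (Box \<pi> (Neg (char_fm B))) (C |-| A))"
    and h2: "P (Neg |`| char_fm |`| Z, {|\<phi>|})"
  shows "P (A, finsert (Box \<pi> \<phi>) (C |-| A))"
proof (rule multicut[of "Box \<pi> |`| Neg |`| char_fm |`| Z"])
  fix \<sigma> assume "\<sigma> |\<in>| Box \<pi> |`| Neg |`| char_fm |`| Z"
  then obtain B where B: "B |\<in>| Z" "\<sigma> = Box \<pi> (Neg (char_fm B))" by auto
  from h1[OF B(1)] show "P (A, finsert \<sigma> (finsert (Box \<pi> \<phi>) (C |-| A)))" by (rule wk) (use B in auto)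
next
  have "P (Box \<pi> |`| (Neg |`| char_fm |`| Z), finsert (Box \<pi> \<phi>) {||})" by (rule boxR) (use h2 in simp)
  then show "P (Box \<pi> |`| Neg |`| char_fm |`| Z |\<union>| A, finsert (Box \<pi> \<phi>) (C |-| A))" by (auto elim: wk)
qed

lemma boxCR_lift:
  assumes h1: "\<And>B. B |\<in>| Z \<Longrightarrow> P (A, finsert (BoxC \<pi> (Neg (char_fm B))) (C |-| A))"
    and h2: "P (Neg |`| char_fm |`| Z, {|\<phi>|})"
  shows "P (A, finsert (BoxC \<pi> \<phi>) (C |-| A))"
proof (rule multicut[of "BoxC \<pi> |`| Neg |`| char_fm |`| Z"])
  fix \<sigma> assume "\<sigma> |\<in>| BoxC \<pi> |`| Neg |`| char_fm |`| Z"
  then obtain B where B: "B |\<in>| Z" "\<sigma> = BoxC \<pi> (Neg (char_fm B))" by auto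
  from h1[OF B(1)] show "P (A, finsert \<sigma> (finsert (BoxC \<pi> \<phi>) (C |-| A)))" by (rule wk) (use B in auto)
next
  have "P (BoxC \<pi> |`| (Neg |`| char_fm |`| Z), finsert (BoxC \<pi> \<phi>) {||})" by (rule boxCR) (use h2 in simp)
  then show "P (BoxC \<pi> |`| Neg |`| char_fm |`| Z |\<union>| A, finsert (BoxC \<pi> \<phi>) (C |-| A))" by (auto elim: wk)
qed

lemma adjunction: "P ({|x|}, {|Box \<pi> (Neg y)|}) \<Longrightarrow> P ({|y|}, {|BoxC \<pi> (Neg x)|})"
proof -
  assume h: "P ({|x|}, {|Box \<pi> (Neg y)|})"
  have "P ({||}, finsert (Neg x) (Box \<pi> |`| {|Neg y|}))" by (rule negR) (use h in simp)
  then have "P (BoxC \<pi> |`| {||}, finsert (BoxC \<pi> (Neg x)) {|Neg y|})" by (rule boxCR)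
  then have 1: "P ({|y|}, finsert (Neg y) {|BoxC \<pi> (Neg x)|})" by (auto elim: wk)
  have 2: "P (finsert (Neg y) {|y|}, {|BoxC \<pi> (Neg x)|})" by (rule negL) (rule ax[of y], auto)
  from 1 2 show ?thesis by (rule cut)
qed

definition truthful :: "('p, 'a) fm \<Rightarrow> bool" where
  "truthful \<theta> \<longleftrightarrow> (\<forall>A. \<theta> |\<in>| C \<longrightarrow> atom A \<longrightarrow> (csat A \<theta> \<longleftrightarrow> \<theta> |\<in>| A))"
definition rel_complete :: "('p, 'a) pg \<Rightarrow> bool" where
  "rel_complete \<pi> \<longleftrightarrow> (\<forall>A B. atom A \<longrightarrow> atom B \<longrightarrow> compatible \<pi> A B \<longrightarrow> (A,B) \<in> crel \<pi>)"
definition rel_respects_boxes :: "('p, 'a) pg \<Rightarrow> bool" where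
  "rel_respects_boxes \<pi> \<longleftrightarrow> (\<forall>\<phi> A B. Box \<pi> \<phi> |\<in>| C \<longrightarrow> atom A \<longrightarrow> (A,B) \<in> crel \<pi> \<longrightarrow> Box \<pi> \<phi> |\<in>| A \<longrightarrow> \<phi> |\<in>| B)"
definition box_in_C :: "('p, 'a) pg \<Rightarrow> bool" where
  "box_in_C \<pi> \<longleftrightarrow> (\<exists>\<phi>. Box \<pi> \<phi> |\<in>| C)"

lemma rel_complete_At: "rel_complete (At a)"
  unfolding rel_complete_def CR_def by simp

lemma rel_respects_boxes_At: "rel_respects_boxes (At a)"
  unfolding rel_respects_boxes_def
proof (intro allI impI)
  fix \<phi> A B
  assume c: "Box (At a) \<phi> |\<in>| C"
    and A: "atom A"
    and AB: "(A, B) \<in> crel (At a)"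
    and i: "Box (At a) \<phi> |\<in>| A"
  from AB have B: "atom B" and con: "compatible (At a) A B" unfolding CR_def by auto
  show "\<phi> |\<in>| B"
  proof (rule ccontr)
    assume n: "\<phi> |\<notin>| B"
    have Bs: "B |\<subseteq>| C" using B unfolding atom_def by blast
    have "P (finsert (char_fm B) {|\<phi>|}, {||})" by (rule char_fmL[OF Bs]) (rule ax[of \<phi>]; use n C_Box[OF c] in auto)
    then have "P ({|\<phi>|}, finsert (Neg (char_fm B)) (BoxC (At a) |`| {||}))" by (simp add: negR)
    then have "P (Box (At a) |`| {|\<phi>|}, finsert (Box (At a) (Neg (char_fm B))) {||})" by (rule boxR)
    then have "P (A, finsert (Box (At a) (Neg (char_fm B))) (C |-| A))" using i by (auto elim: wk)
    then show False using con unfolding compatible_def by blast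
  qed
qed

lemma rel_complete_Sq:
  assumes "rel_complete \<pi>0" "rel_complete \<pi>1"
  shows "rel_complete (Sq \<pi>0 \<pi>1)"
  unfolding rel_complete_def
proof (intro allI impI)
  fix A B assume A: "atom A" and B: "atom B" and con: "compatible (Sq \<pi>0 \<pi>1) A B"
  show "(A, B) \<in> crel (Sq \<pi>0 \<pi>1)"
  proof (cases "\<exists>D. atom D \<and> compatible \<pi>0 A D \<and> compatible \<pi>1 D B")
    case True
    then obtain D where D: "atom D" "compatible \<pi>0 A D" "compatible \<pi>1 D B" by blast
    have "(A,D) \<in> crel \<pi>0" "(D,B) \<in> crel \<pi>1" using assms A B D unfolding rel_complete_def by blast+
    then show ?thesis by auto
  next
    case False
    define Z where "Z = ffilter (\<lambda>D. compatible \<pi>1 D B) atoms"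
    have "P (A, finsert (Box \<pi>0 (Box \<pi>1 (Neg (char_fm B)))) (C |-| A))"
    proof (rule boxR_lift)
      fix D assume "D |\<in>| Z"
      then have "atom D" "compatible \<pi>1 D B" by (auto simp: Z_def atoms_iff)
      then show "P (A, finsert (Box \<pi>0 (Neg (char_fm D))) (C |-| A))" using False unfolding compatible_def by blast
    next
      show "P (Neg |`| char_fm |`| Z, {|Box \<pi>1 (Neg (char_fm B))|})"
      proof (rule neg_char_split)
        fix E assume "atom E" "E |\<notin>| Z"
        then show "P (E, finsert (Box \<pi>1 (Neg (char_fm B))) (C |-| E))" by (auto simp: Z_def atoms_iff compatible_def)
      qed
    qed
    then have "P (A, finsert (Box (Sq \<pi>0 \<pi>1) (Neg (char_fm B))) (C |-| A))" by (rule sqR)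
    then show ?thesis using con unfolding compatible_def by blast
  qed
qed

lemma rel_respects_boxes_Sq:
  assumes "rel_respects_boxes \<pi>0" "rel_respects_boxes \<pi>1"
  shows "rel_respects_boxes (Sq \<pi>0 \<pi>1)"
  unfolding rel_respects_boxes_def
proof (intro allI impI)
  fix \<phi> A B
  assume c: "Box (Sq \<pi>0 \<pi>1) \<phi> |\<in>| C"
    and A: "atom A"
    and AB: "(A, B) \<in> crel (Sq \<pi>0 \<pi>1)"
    and i: "Box (Sq \<pi>0 \<pi>1) \<phi> |\<in>| A"
  from AB obtain D where D: "(A,D) \<in> crel \<pi>0" "(D,B) \<in> crel \<pi>1" by auto
  have "Box \<pi>0 (Box \<pi>1 \<phi>) |\<in>| A" by (rule atom_Sq[OF A c i])
  then have "Box \<pi>1 \<phi> |\<in>| D" using assms(1) C_Sq[OF c] A D(1) unfolding rel_respects_boxes_def by blast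
  then show "\<phi> |\<in>| B" using assms(2) C_Sq[OF c] crel_atoms[OF D(1)] D(2) unfolding rel_respects_boxes_def by blast
qed

lemma rel_complete_Ch:
  assumes "rel_complete \<pi>0" "rel_complete \<pi>1"
  shows "rel_complete (Ch \<pi>0 \<pi>1)"
  unfolding rel_complete_def
proof (intro allI impI)
  fix A B assume A: "atom A" and B: "atom B" and con: "compatible (Ch \<pi>0 \<pi>1) A B"
  have "compatible \<pi>0 A B \<or> compatible \<pi>1 A B"
  proof (rule ccontr)
    assume "\<not> ?thesis"
    then have "P (A, finsert (Box (Ch \<pi>0 \<pi>1) (Neg (char_fm B))) (C |-| A))" unfolding compatible_def by (intro chR) auto
    then show False using con unfolding compatible_def by blast
  qed
  then show "(A, B) \<in> crel (Ch \<pi>0 \<pi>1)" using assms A B unfolding rel_complete_def by auto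
qed

lemma rel_respects_boxes_Ch:
  assumes "rel_respects_boxes \<pi>0" "rel_respects_boxes \<pi>1"
  shows "rel_respects_boxes (Ch \<pi>0 \<pi>1)"
  unfolding rel_respects_boxes_def
proof (intro allI impI)
  fix \<phi> A B
  assume c: "Box (Ch \<pi>0 \<pi>1) \<phi> |\<in>| C"
    and A: "atom A"
    and AB: "(A, B) \<in> crel (Ch \<pi>0 \<pi>1)"
    and i: "Box (Ch \<pi>0 \<pi>1) \<phi> |\<in>| A"
  have m: "Box \<pi>0 \<phi> |\<in>| A" "Box \<pi>1 \<phi> |\<in>| A" using atom_Ch[OF A c i] by auto
  from AB have "(A,B) \<in> crel \<pi>0 \<or> (A,B) \<in> crel \<pi>1" by simp
  then show "\<phi> |\<in>| B" using assms C_Ch[OF c] A m unfolding rel_respects_boxes_def by blast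
qed

lemma rel_complete_Test:
  assumes T: "truthful \<psi>" and c: "\<psi> |\<in>| C"
  shows "rel_complete (Test \<psi>)"
  unfolding rel_complete_def
proof (intro allI impI)
  fix A B assume A: "atom A" and B: "atom B" and con: "compatible (Test \<psi>) A B"
  have pA: "\<psi> |\<in>| A"
  proof (rule ccontr)
    assume n: "\<psi> |\<notin>| A"
    have "P (finsert \<psi> A, finsert (Neg (char_fm B)) (C |-| A))" by (rule ax[of \<psi>]) (use n c in auto)
    then have "P (A, finsert (Box (Test \<psi>) (Neg (char_fm B))) (C |-| A))" by (rule testR)
    then show False using con unfolding compatible_def by blast
  qed
  have AB: "A = B"
  proof (rule ccontr)
    assume n: "A \<noteq> B"
    have Bs: "B |\<subseteq>| C" using B unfolding atom_def by blast
    have "P (finsert (char_fm B) (finsert \<psi> A), C |-| A)"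
      by (rule char_fmL[OF Bs]) (rule distinct_atoms[OF A B n]; auto)
    then have "P (finsert \<psi> A, finsert (Neg (char_fm B)) (C |-| A))" by (rule negR)
    then have "P (A, finsert (Box (Test \<psi>) (Neg (char_fm B))) (C |-| A))" by (rule testR)
    then show False using con unfolding compatible_def by blast
  qed
  have "csat A \<psi>" using T c A pA unfolding truthful_def by blast
  then show "(A, B) \<in> crel (Test \<psi>)" using AB A unfolding CW_def by simp
qed

lemma rel_respects_boxes_Test: assumes T: "truthful \<psi>" shows "rel_respects_boxes (Test \<psi>)"
  unfolding rel_respects_boxes_def
proof (intro allI impI)
  fix \<phi> A B
  assume c: "Box (Test \<psi>) \<phi> |\<in>| C"
    and A: "atom A"
    and AB: "(A, B) \<in> crel (Test \<psi>)"
    and i: "Box (Test \<psi>) \<phi> |\<in>| A"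
  from AB have e: "B = A" and s: "csat A \<psi>" by auto
  have "\<psi> |\<in>| A" using T C_Test[OF c] A s unfolding truthful_def by blast
  then show "\<phi> |\<in>| B" using atom_Test[OF A c i] e by simp
qed

lemma rel_respects_boxes_Star:
  assumes IH: "rel_respects_boxes \<pi>"
  shows "rel_respects_boxes (Star \<pi>)"
  unfolding rel_respects_boxes_def
proof (intro allI impI)
  fix \<phi> A B
  assume c: "Box (Star \<pi>) \<phi> |\<in>| C"
    and A: "atom A"
    and AB: "(A, B) \<in> crel (Star \<pi>)"
    and i: "Box (Star \<pi>) \<phi> |\<in>| A"
  have tr: "Box (Star \<pi>) \<phi> |\<in>| D" if "(A, D) \<in> (crel \<pi>)\<^sup>+" for D
    using that
  proof (induction rule: trancl_induct)
    case (base y)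
    have "Box \<pi> (Box (Star \<pi>) \<phi>) |\<in>| A" using atom_Star[OF A c i] by blast
    then show ?case using IH C_Star[OF c] A base unfolding rel_respects_boxes_def by blast
  next
    case (step y z)
    have y: "atom y" using crel_atoms[OF step.hyps(2)] by blast
    have "Box \<pi> (Box (Star \<pi>) \<phi>) |\<in>| y" using atom_Star[OF y c step.IH] by blast
    then show ?case using IH C_Star[OF c] y step.hyps(2) unfolding rel_respects_boxes_def by blast
  qed
  from AB have "B = A \<or> (A, B) \<in> (crel \<pi>)\<^sup>+" by auto
  then show "\<phi> |\<in>| B"
  proof
    assume "B = A" then show ?thesis using atom_Star[OF A c i] by simp
  next
    assume t: "(A, B) \<in> (crel \<pi>)\<^sup>+"
    have "atom B" using crel_atoms[of A B "Star \<pi>"] AB by blast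
    then show ?thesis using atom_Star[OF _ c tr[OF t]] by blast
  qed
qed

lemma Disj_char_fmR:
  assumes "D |\<in>| X" "atom D"
  shows "P (D, finsert (Disj (char_fm |`| X)) (C |-| D))"
proof (rule DisjR)
  have "P (D, finsert (char_fm D) (char_fm |`| X |\<union>| (C |-| D)))" by (rule char_fmR) auto
  then show "P (D, char_fm |`| X |\<union>| (C |-| D))" using assms(1) by (auto elim: wk)
qed

lemma Disj_char_fm_excludes:
  assumes X: "\<And>D. D |\<in>| X \<Longrightarrow> atom D" and B: "atom B" "B |\<notin>| X"
  shows "P ({|Disj (char_fm |`| X)|}, {|Neg (char_fm B)|})"
proof (rule DisjL[where \<Gamma> = "{||}", simplified])
  fix \<chi> assume "\<chi> |\<in>| char_fm |`| X"
  then obtain D where D: "D |\<in>| X" "\<chi> = char_fm D" by auto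
  have "D \<noteq> B" using D(1) B(2) by auto
  have sub: "D |\<subseteq>| C" "B |\<subseteq>| C" using X[OF D(1)] B(1) by (auto simp: atom_def)
  have "P (finsert (char_fm D) (B |\<union>| {||}), (C |-| B) |\<union>| {||})"
    by (rule char_fmL[OF sub(1)]) (rule distinct_atoms[OF X[OF D(1)] B(1) \<open>D \<noteq> B\<close>]; auto)
  then have "P (finsert (char_fm B) (finsert (char_fm D) {||}), {||})"
    by (intro char_fmL[OF sub(2)]) (auto elim: wk)
  then show "P ({|\<chi>|}, {|Neg (char_fm B)|})" using D(2) by (simp add: negR)
qed

(* The disjunction of the characteristic formulas of a set of atoms closed under \<pi>-successors
   is an invariant of \<pi>; this is what the induction rule needs. *)
lemma Disj_char_fm_invariant:
  assumes complete: "rel_complete \<pi>" and X: "\<And>D. D |\<in>| X \<Longrightarrow> atom D"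
    and closed: "\<And>D E. D |\<in>| X \<Longrightarrow> atom E \<Longrightarrow> (D, E) \<in> crel \<pi> \<Longrightarrow> E |\<in>| X"
  shows "P ({|Disj (char_fm |`| X)|}, {|Box \<pi> (Disj (char_fm |`| X))|})"
proof (rule DisjL[where \<Gamma> = "{||}", simplified])
  fix \<chi> assume "\<chi> |\<in>| char_fm |`| X"
  then obtain D where D: "D |\<in>| X" "\<chi> = char_fm D" by auto
  define Y where "Y = ffilter (\<lambda>E. E |\<notin>| X) atoms"
  have "P (D, finsert (Box \<pi> (Disj (char_fm |`| X))) (C |-| D))"
  proof (rule boxR_lift[of Y])
    fix E assume "E |\<in>| Y"
    then have E: "atom E" "E |\<notin>| X" by (auto simp: Y_def atoms_iff)
    show "P (D, finsert (Box \<pi> (Neg (char_fm E))) (C |-| D))"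
    proof (rule ccontr)
      assume "\<not> ?thesis"
      then have "(D, E) \<in> crel \<pi>" using complete X[OF D(1)] E(1) unfolding rel_complete_def compatible_def by blast
      then show False using closed D(1) E by blast
    qed
  next
    show "P (Neg |`| char_fm |`| Y, {|Disj (char_fm |`| X)|})"
      by (rule neg_char_split) (auto simp: Y_def atoms_iff intro: Disj_char_fmR)
  qed
  moreover have "D |\<subseteq>| C" using X[OF D(1)] by (simp add: atom_def)
  ultimately have "P (finsert (char_fm D) {||}, {|Box \<pi> (Disj (char_fm |`| X))|})"
    by (intro char_fmL) (auto elim: wk)
  then show "P ({|\<chi>|}, {|Box \<pi> (Disj (char_fm |`| X))|})" using D(2) by simp
qed

lemma rel_complete_Star:
  assumes "rel_complete \<pi>" shows "rel_complete (Star \<pi>)"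
  unfolding rel_complete_def
proof (intro allI impI)
  fix A B assume A: "atom A" and B: "atom B" and compat: "compatible (Star \<pi>) A B"
  show "(A, B) \<in> crel (Star \<pi>)"
  proof (rule ccontr)
    assume B_unreachable: "(A, B) \<notin> crel (Star \<pi>)"
    define X where "X = ffilter (\<lambda>D. (A, D) \<in> crel (Star \<pi>)) atoms"
    define \<chi> where "\<chi> = Disj (char_fm |`| X)"
    have X_iff: "D |\<in>| X \<longleftrightarrow> atom D \<and> (A, D) \<in> crel (Star \<pi>)" for D
      by (auto simp: X_def atoms_iff)
    let ?G = "finsert (Box (Star \<pi>) (Neg (char_fm B))) (C |-| A)"
    have "A |\<in>| X" using A unfolding X_iff by (auto simp: CW_def)
    then have "P (A, finsert \<chi> (C |-| A))" unfolding \<chi>_def using A by (rule Disj_char_fmR)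
    then have 1: "P (A, finsert \<chi> ?G)" by (auto elim: wk)
    have "P ({|\<chi>|}, {|Box (Star \<pi>) \<chi>|})"
      unfolding \<chi>_def using assms
      by (intro star_induction Disj_char_fm_invariant) (auto simp: X_iff simp del: rel.simps intro: rel_Star_stepR)
    then have 2: "P (finsert \<chi> A, finsert (Box (Star \<pi>) \<chi>) ?G)" by (auto elim: wk)
    have "P (Box (Star \<pi>) |`| {|\<chi>|}, finsert (Box (Star \<pi>) (Neg (char_fm B))) {||})"
      using Disj_char_fm_excludes[of X B] B B_unreachable unfolding \<chi>_def X_iff
      by (intro boxR) simp
    then have 3: "P (finsert (Box (Star \<pi>) \<chi>) (finsert \<chi> A), ?G)" by (auto elim: wk)
    from 1 cut[OF 2 3] have "P (A, ?G)" by (rule cut)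
    then show False using compat unfolding compatible_def by blast
  qed
qed

lemma truthful_Bot: "truthful Bot"
  unfolding truthful_def using atom_Bot by auto

lemma truthful_Var: "truthful (Var p)"
  unfolding truthful_def by (simp add: CV_def)

lemma truthful_Imp: "truthful \<phi> \<Longrightarrow> truthful \<psi> \<Longrightarrow> truthful (Imp \<phi> \<psi>)"
  unfolding truthful_def using C_Imp atom_Imp by (metis sat.simps(3))

lemma Box_mem_if_csat:
  assumes complete: "rel_complete \<pi>" and \<phi>: "truthful \<phi>"
    and c: "Box \<pi> \<phi> |\<in>| C" and A: "atom A" and s: "csat A (Box \<pi> \<phi>)"
  shows "Box \<pi> \<phi> |\<in>| A"
proof (rule ccontr)
  assume n: "Box \<pi> \<phi> |\<notin>| A"
  define Z where "Z = ffilter (\<lambda>B. \<phi> |\<notin>| B) atoms"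
  have "P (A, finsert (Box \<pi> \<phi>) (C |-| A))"
  proof (rule boxR_lift[of Z])
    fix B assume "B |\<in>| Z"
    then have B: "atom B" "\<phi> |\<notin>| B" by (auto simp: Z_def atoms_iff)
    show "P (A, finsert (Box \<pi> (Neg (char_fm B))) (C |-| A))"
    proof (rule ccontr)
      assume "\<not> ?thesis"
      then have "(A, B) \<in> crel \<pi>" using complete A B unfolding rel_complete_def compatible_def by blast
      then have "csat B \<phi>" using s by simp
      then show False using \<phi> C_Box[OF c] B unfolding truthful_def by blast
    qed
  next
    show "P (Neg |`| char_fm |`| Z, {|\<phi>|})"
      by (rule neg_char_split) (auto simp: Z_def atoms_iff intro: ax)
  qed
  then show False using atom_excludes[OF A c n] by blast
qed

lemma truthful_Box:
  assumes "box_in_C \<pi> \<Longrightarrow> rel_complete \<pi> \<and> rel_respects_boxes \<pi>" and \<phi>: "truthful \<phi>"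
  shows "truthful (Box \<pi> \<phi>)"
  unfolding truthful_def
proof (intro allI impI)
  fix A assume c: "Box \<pi> \<phi> |\<in>| C" and A: "atom A"
  then have complete: "rel_complete \<pi>" and respects: "rel_respects_boxes \<pi>"
    using assms(1) by (auto simp: box_in_C_def)
  have "csat A (Box \<pi> \<phi>)" if "Box \<pi> \<phi> |\<in>| A"
  proof (simp only: sat.simps, intro allI impI)
    fix B assume AB: "(A, B) \<in> crel \<pi>"
    then have "\<phi> |\<in>| B" using respects c A that unfolding rel_respects_boxes_def by blast
    then show "csat B \<phi>" using \<phi> C_Box[OF c] crel_atoms[OF AB] unfolding truthful_def by blast
  qed
  then show "csat A (Box \<pi> \<phi>) \<longleftrightarrow> Box \<pi> \<phi> |\<in>| A"
    using Box_mem_if_csat[OF complete \<phi> c A] by blast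
qed

lemma BoxC_mem_if_csat:
  assumes complete: "rel_complete \<pi>" and \<phi>: "truthful \<phi>"
    and c: "BoxC \<pi> \<phi> |\<in>| C" and A: "atom A" and s: "csat A (BoxC \<pi> \<phi>)"
  shows "BoxC \<pi> \<phi> |\<in>| A"
proof (rule ccontr)
  assume n: "BoxC \<pi> \<phi> |\<notin>| A"
  define Z where "Z = ffilter (\<lambda>B. \<phi> |\<notin>| B) atoms"
  have "P (A, finsert (BoxC \<pi> \<phi>) (C |-| A))"
  proof (rule boxCR_lift[of Z])
    fix B assume "B |\<in>| Z"
    then have B: "atom B" "\<phi> |\<notin>| B" by (auto simp: Z_def atoms_iff)
    have "P (B, finsert (Box \<pi> (Neg (char_fm A))) (C |-| B))"
    proof (rule ccontr)
      assume "\<not> ?thesis"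
      then have "(B, A) \<in> crel \<pi>" using complete A B unfolding rel_complete_def compatible_def by blast
      then have "csat B \<phi>" using s by simp
      then show False using \<phi> C_BoxC[OF c] B unfolding truthful_def by blast
    qed
    then have "P (finsert (char_fm B) {||}, {|Box \<pi> (Neg (char_fm A))|})"
      using B(1) by (intro char_fmL) (auto simp: atom_def elim: wk)
    then have "P ({|char_fm A|}, {|BoxC \<pi> (Neg (char_fm B))|})" by (intro adjunction) simp
    then have "P (finsert (char_fm A) A, finsert (BoxC \<pi> (Neg (char_fm B))) (C |-| A))"
      by (auto elim: wk)
    with char_fmR show "P (A, finsert (BoxC \<pi> (Neg (char_fm B))) (C |-| A))"
      by (rule cut) auto
  next
    show "P (Neg |`| char_fm |`| Z, {|\<phi>|})"
      by (rule neg_char_split) (auto simp: Z_def atoms_iff intro: ax)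
  qed
  then show False using atom_excludes[OF A c n] by blast
qed

lemma csat_BoxC_if_mem:
  assumes respects: "rel_respects_boxes \<pi>" and \<phi>: "truthful \<phi>"
    and c: "BoxC \<pi> \<phi> |\<in>| C" and A: "atom A" and i: "BoxC \<pi> \<phi> |\<in>| A"
  shows "csat A (BoxC \<pi> \<phi>)"
proof (simp only: sat.simps, intro allI impI)
  fix B assume BA: "(B, A) \<in> crel \<pi>"
  have B: "atom B" using crel_atoms[OF BA] by blast
  have c\<phi>: "\<phi> |\<in>| C" and cX: "Box \<pi> (Neg (BoxC \<pi> \<phi>)) |\<in>| C" using C_BoxC[OF c] by auto
  have "\<phi> |\<in>| B"
  proof (rule ccontr)
    assume nB: "\<phi> |\<notin>| B"
    have conv: "P ({||}, {|\<phi>, Box \<pi> (Neg (BoxC \<pi> \<phi>))|})"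
    proof -
      have "P ({||}, finsert (Neg (BoxC \<pi> \<phi>)) (BoxC \<pi> |`| {|\<phi>|}))" by (intro negR ax) auto
      then have "P (Box \<pi> |`| {||}, finsert (Box \<pi> (Neg (BoxC \<pi> \<phi>))) {|\<phi>|})" by (rule boxR)
      then show ?thesis by (simp add: finsert_commute)
    qed
    have "Box \<pi> (Neg (BoxC \<pi> \<phi>)) |\<in>| B"
    proof (rule ccontr)
      assume "Box \<pi> (Neg (BoxC \<pi> \<phi>)) |\<notin>| B"
      with nB cX c\<phi> have "{|\<phi>, Box \<pi> (Neg (BoxC \<pi> \<phi>))|} |\<subseteq>| C |-| B" by auto
      then show False using atom_consistent[OF B conv] by simp
    qed
    then have "Neg (BoxC \<pi> \<phi>) |\<in>| A" using respects cX B BA unfolding rel_respects_boxes_def by blast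
    then have "P (A, C |-| A)" by (rule negL_mem) (rule ax[of "BoxC \<pi> \<phi>"]; use i in auto)
    then show False using A unfolding atom_def by blast
  qed
  then show "csat B \<phi>" using \<phi> c\<phi> B unfolding truthful_def by blast
qed

lemma truthful_BoxC:
  assumes "box_in_C \<pi> \<Longrightarrow> rel_complete \<pi> \<and> rel_respects_boxes \<pi>" and \<phi>: "truthful \<phi>"
  shows "truthful (BoxC \<pi> \<phi>)"
  unfolding truthful_def
proof (intro allI impI)
  fix A assume c: "BoxC \<pi> \<phi> |\<in>| C" and A: "atom A"
  then have "rel_complete \<pi>" "rel_respects_boxes \<pi>"
    using assms(1) C_BoxC by (auto simp: box_in_C_def)
  then show "csat A (BoxC \<pi> \<phi>) \<longleftrightarrow> BoxC \<pi> \<phi> |\<in>| A"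
    using BoxC_mem_if_csat csat_BoxC_if_mem \<phi> c A by blast
qed

(* Programs only need to be handled when a box over them lies in C; closure under FL passes
   this on to their subprograms and, through tests, to subformulas. *)
lemma truthful_all: "truthful \<theta>"
proof (induction \<theta> rule: fm.induct[where ?P2.0 = "\<lambda>\<pi>. box_in_C \<pi> \<longrightarrow> rel_complete \<pi> \<and> rel_respects_boxes \<pi>"])
  case (At a)
  show ?case using rel_complete_At rel_respects_boxes_At by blast
next
  case (Sq \<pi>0 \<pi>1)
  then show ?case using rel_complete_Sq rel_respects_boxes_Sq C_Sq unfolding box_in_C_def by blast
next
  case (Ch \<pi>0 \<pi>1)
  then show ?case using rel_complete_Ch rel_respects_boxes_Ch C_Ch unfolding box_in_C_def by blast
next
  case (Star \<pi>)
  then show ?case using rel_complete_Star rel_respects_boxes_Star C_Star unfolding box_in_C_def by blast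
next
  case (Test \<psi>)
  then show ?case using rel_complete_Test rel_respects_boxes_Test C_Test unfolding box_in_C_def by blast
qed (auto intro: truthful_Bot truthful_Var truthful_Imp truthful_Box truthful_BoxC)

lemma truth_lemma: "\<theta> |\<in>| C \<Longrightarrow> atom A \<Longrightarrow> csat A \<theta> \<longleftrightarrow> \<theta> |\<in>| A"
  using truthful_all unfolding truthful_def by blast

end

section \<open>Completeness\<close>

lemma map_prod_image_iff:
  assumes r: "r \<subseteq> W \<times> W" and inj: "inj_on h W" and w: "w \<in> W"
  shows "(h w, x) \<in> map_prod h h ` r \<longleftrightarrow> (\<exists>v. x = h v \<and> (w, v) \<in> r)"
    and "(x, h w) \<in> map_prod h h ` r \<longleftrightarrow> (\<exists>v. x = h v \<and> (v, w) \<in> r)"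
proof -
  have eq: "a = w" if "a \<in> W" "h a = h w" for a using inj_onD[OF inj that(2) that(1) w] .
  show "(h w, x) \<in> map_prod h h ` r \<longleftrightarrow> (\<exists>v. x = h v \<and> (w, v) \<in> r)"
    using r eq by fastforce
  show "(x, h w) \<in> map_prod h h ` r \<longleftrightarrow> (\<exists>v. x = h v \<and> (v, w) \<in> r)"
    using r eq by fastforce
qed

lemma trancl_image_map_prod:
  assumes r: "r \<subseteq> W \<times> W" and inj: "inj_on h W"
  shows "(map_prod h h ` r)\<^sup>+ = map_prod h h ` r\<^sup>+"
proof (intro equalityI subsetI)
  fix p assume "p \<in> (map_prod h h ` r)\<^sup>+"
  then obtain x y where p: "p = (x, y)" "(x, y) \<in> (map_prod h h ` r)\<^sup>+" by (cases p) auto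
  from p(2) have "(x, y) \<in> map_prod h h ` r\<^sup>+"
  proof (induction rule: trancl_induct)
    case (step y z)
    then obtain a b b' c where "(a, b) \<in> r\<^sup>+" "(b', c) \<in> r" "x = h a" "y = h b" "y = h b'" "z = h c"
      by auto
    moreover from this have "b = b'"
      using inj r trancl_subset_Sigma[OF r] by (metis inj_onD mem_Sigma_iff subsetD)
    ultimately show ?case by (auto intro: trancl_into_trancl)
  qed force
  with p(1) show "p \<in> map_prod h h ` r\<^sup>+" by simp
next
  fix p assume "p \<in> map_prod h h ` r\<^sup>+"
  then obtain a b where p: "p = (h a, h b)" "(a, b) \<in> r\<^sup>+" by auto
  from p(2) have "(h a, h b) \<in> (map_prod h h ` r)\<^sup>+"
    by (induction rule: trancl_induct) (force intro: trancl_into_trancl)+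
  with p(1) show "p \<in> (map_prod h h ` r)\<^sup>+" by simp
qed

lemma relcomp_image_map_prod:
  assumes "r \<subseteq> W \<times> W" "s \<subseteq> W \<times> W" and "inj_on h W"
  shows "map_prod h h ` r O map_prod h h ` s = map_prod h h ` (r O s)"
proof (intro equalityI subsetI)
  fix p assume "p \<in> map_prod h h ` r O map_prod h h ` s"
  then obtain a b b' c where "(a, b) \<in> r" "(b', c) \<in> s" "h b = h b'" "p = (h a, h c)" by blast
  moreover from this have "b = b'" using assms by (meson inj_onD mem_Sigma_iff subsetD)
  ultimately show "p \<in> map_prod h h ` (r O s)" by force
qed force

lemma sat_map_inj:
  fixes h :: "'w \<Rightarrow> 'v" and V :: "'w \<Rightarrow> 'p set"
  assumes R_worlds: "\<forall>a. R a \<subseteq> W \<times> W" and inj: "inj_on h W"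
  defines "R' \<equiv> \<lambda>a. map_prod h h ` R a" and "V' \<equiv> \<lambda>x. V (inv_into W h x)"
  shows "w \<in> W \<Longrightarrow> sat (h ` W) R' V' (h w) \<theta> \<longleftrightarrow> sat W R V w \<theta>"
proof (induction \<theta> arbitrary: w rule: fm.induct[where ?P2.0 = "\<lambda>\<pi>. rel (h ` W) R' V' \<pi> = map_prod h h ` rel W R V \<pi>"])
  case (Var p)
  then show ?case using inj by (simp add: V'_def)
next
  case (Box \<pi> \<phi>)
  have r: "rel W R V \<pi> \<subseteq> W \<times> W" by (rule rel_subset_worlds[OF R_worlds])
  show ?case
    using Box.IH r map_prod_image_iff(1)[OF r inj Box.prems] by (auto simp: Box.hyps) blast
next
  case (BoxC \<pi> \<phi>)
  have r: "rel W R V \<pi> \<subseteq> W \<times> W" by (rule rel_subset_worlds[OF R_worlds])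
  show ?case
    using BoxC.IH r map_prod_image_iff(2)[OF r inj BoxC.prems] by (auto simp: BoxC.hyps) blast
next
  case (At a)
  show ?case by (simp add: R'_def)
next
  case (Sq \<pi>0 \<pi>1)
  then show ?case
    using relcomp_image_map_prod[OF rel_subset_worlds[OF R_worlds] rel_subset_worlds[OF R_worlds] inj]
    by simp
next
  case (Star \<pi>)
  have "Id_on (h ` W) = map_prod h h ` Id_on W" by (auto simp: Id_on_def)
  with Star show ?case
    using trancl_image_map_prod[OF rel_subset_worlds[OF R_worlds, of V \<pi>] inj] by (simp add: image_Un)
next
  case (Test \<psi>)
  then show ?case by auto
qed (simp_all add: image_Un)

lemma finite_refutation_imp_not_valid_nat:
  assumes "finite W" and R_worlds: "\<forall>a. R a \<subseteq> W \<times> W" and refuted: "refutes W R V S w"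
  shows "\<not> valid TYPE(nat) S"
proof
  assume valid: "valid TYPE(nat) S"
  obtain h :: "_ \<Rightarrow> nat" where inj: "inj_on h W"
    using finite_imp_inj_to_nat_seg[OF \<open>finite W\<close>] by blast
  define R' where "R' = (\<lambda>a. map_prod h h ` R a)"
  define V' where "V' = (\<lambda>x. V (inv_into W h x))"
  have "w \<in> W" using refuted by (simp add: refutes_def)
  have sat_iff: "sat (h ` W) R' V' (h w) \<phi> \<longleftrightarrow> sat W R V w \<phi>" for \<phi>
    unfolding R'_def V'_def by (rule sat_map_inj[OF R_worlds inj \<open>w \<in> W\<close>])
  have "\<forall>a. R' a \<subseteq> h ` W \<times> h ` W" using R_worlds by (auto simp: R'_def)
  moreover have "h w \<in> h ` W" using \<open>w \<in> W\<close> by blast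
  moreover have "\<forall>\<phi>. \<phi> |\<in>| fst S \<longrightarrow> sat (h ` W) R' V' (h w) \<phi>"
    using refuted by (simp add: sat_iff refutes_def)
  ultimately obtain \<psi> where "\<psi> |\<in>| snd S" "sat (h ` W) R' V' (h w) \<psi>"
    using valid[unfolded valid_def, rule_format, of "h ` W" R' "h w" V'] by blast
  then show False using refuted by (simp add: sat_iff refutes_def)
qed

context canonical_model
begin

lemma finite_CW: "finite CW"
proof (rule finite_subset)
  show "CW \<subseteq> fset (fPow C)" by (auto simp: CW_def atom_def)
qed simp

lemma canonical_refutation:
  assumes "atom A" "fst S |\<subseteq>| A" "snd S |\<subseteq>| C |-| A"
  shows "refutes CW CR CV S A"
proof -
  have "fst S |\<subseteq>| C" "snd S |\<subseteq>| C" using assms by (auto simp: atom_def)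
  then show ?thesis
    using assms truth_lemma[OF _ assms(1)] unfolding refutes_def CW_def by auto
qed

end

definition FL_seq :: "('p, 'a) seq \<Rightarrow> ('p, 'a) fm fset" where
  "FL_seq S = Abs_fset (\<Union> (FL ` (fset (fst S) \<union> fset (snd S))))"

lemma fset_FL_seq: "fset (FL_seq S) = \<Union> (FL ` (fset (fst S) \<union> fset (snd S)))"
  unfolding FL_seq_def by (rule Abs_fset_inverse) (simp add: finite_FL)

theorem (in derivable) completeness:
  assumes "valid TYPE(nat) S" shows "P S"
proof (rule ccontr)
  assume "\<not> P S"
  have FL_seq_closed: "FL \<psi> \<subseteq> fset (FL_seq S)" if \<psi>: "\<psi> |\<in>| FL_seq S" for \<psi>
  proof -
    obtain \<theta> where \<theta>: "\<theta> \<in> fset (fst S) \<union> fset (snd S)" "\<psi> \<in> FL \<theta>"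
      using \<psi> unfolding fset_FL_seq by blast
    have "FL \<psi> \<subseteq> FL \<theta>" by (rule FL_closed[OF \<theta>(2)])
    also have "\<dots> \<subseteq> fset (FL_seq S)" using \<theta>(1) unfolding fset_FL_seq by blast
    finally show ?thesis .
  qed
  interpret canonical_model P "FL_seq S" by unfold_locales (rule FL_seq_closed)
  have "\<theta> |\<in>| FL_seq S" if "\<theta> \<in> fset (fst S) \<union> fset (snd S)" for \<theta>
    using that FL_self[of \<theta>] unfolding fset_FL_seq by blast
  then have "fst S |\<subseteq>| FL_seq S" "snd S |\<subseteq>| FL_seq S" by blast+
  with \<open>\<not> P S\<close> obtain A where "atom A" "fst S |\<subseteq>| A" "snd S |\<subseteq>| FL_seq S |-| A"
    using lindenbaum[of "fst S" "snd S"] by auto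
  then have "refutes CW CR CV S A" by (rule canonical_refutation)
  from finite_refutation_imp_not_valid_nat[OF finite_CW CR_worlds this] assms show False ..
qed

lemma derivable_gprov: "derivable gprov"
proof
  fix r S Ps assume "common r S Ps" and premises_gprov: "\<And>Q. Q \<in> set Ps \<Longrightarrow> gprov Q"
  from ginst.gcommon[OF this(1)] show "gprov S" by (rule gprov.intros) (use premises_gprov in blast)
next
  fix \<chi> \<pi> assume "gprov ({|\<chi>|}, {|Box \<pi> \<chi>|})"
  have "ginst (RStarR \<pi> \<chi>) ({|\<chi>|}, {|Box (Star \<pi>) \<chi>|}) [({|\<chi>|}, {|Box \<pi> \<chi>|})]"
    using ginst.StarR[of \<pi> \<chi> "{||}"] by simp
  then show "gprov ({|\<chi>|}, {|Box (Star \<pi>) \<chi>|})"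
    by (rule gprov.intros) (simp add: \<open>gprov ({|\<chi>|}, {|Box \<pi> \<chi>|})\<close>)
qed

theorem gprov_iff_valid_nat: "gprov S \<longleftrightarrow> valid TYPE(nat) S"
  using gprov_sound derivable.completeness[OF derivable_gprov] by blast

section \<open>Gluing cyclic pre-proofs\<close>

(* A skeleton on the nodes 0..<K (root 0) is glued to J pre-proofs: node m of the j-th
   pre-proof becomes node K + prod_encode (j, m). *)
definition sub_node :: "nat \<Rightarrow> nat \<Rightarrow> nat \<Rightarrow> nat" where "sub_node K j m = K + prod_encode (j, m)"
definition sub_part :: "nat \<Rightarrow> nat \<Rightarrow> nat" where "sub_part K n = fst (prod_decode (n - K))"
definition sub_local :: "nat \<Rightarrow> nat \<Rightarrow> nat" where "sub_local K n = snd (prod_decode (n - K))"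

lemma sub_node_ge: "K \<le> sub_node K j m"
  by (simp add: sub_node_def)

lemma sub_part_sub_node [simp]: "sub_part K (sub_node K j m) = j"
  by (simp add: sub_part_def sub_node_def)

lemma sub_local_sub_node [simp]: "sub_local K (sub_node K j m) = m"
  by (simp add: sub_local_def sub_node_def)

lemma sub_node_eq_iff [simp]: "sub_node K j m = sub_node K j' m' \<longleftrightarrow> j = j' \<and> m = m'"
  by (metis sub_part_sub_node sub_local_sub_node)

lemma sub_node_not_less [simp]: "\<not> sub_node K j m < K"
  by (simp add: sub_node_def)

definition glue_nodes :: "nat \<Rightarrow> nat \<Rightarrow> (nat \<Rightarrow> nat set) \<Rightarrow> nat set" where
  "glue_nodes K J Ns = {0..<K} \<union> (\<Union>j<J. sub_node K j ` Ns j)"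

definition glue_children :: "nat \<Rightarrow> (nat \<Rightarrow> nat list) \<Rightarrow> (nat \<Rightarrow> nat \<Rightarrow> nat list) \<Rightarrow> nat \<Rightarrow> nat list" where
  "glue_children K chT chs n =
     (if n < K then chT n else map (sub_node K (sub_part K n)) (chs (sub_part K n) (sub_local K n)))"

definition glue_label :: "nat \<Rightarrow> (nat \<Rightarrow> 'x) \<Rightarrow> (nat \<Rightarrow> nat \<Rightarrow> 'x) \<Rightarrow> nat \<Rightarrow> 'x" where
  "glue_label K T S n = (if n < K then T n else S (sub_part K n) (sub_local K n))"

definition glue_companion ::
  "nat \<Rightarrow> (nat \<Rightarrow> nat option) \<Rightarrow> (nat \<Rightarrow> nat \<Rightarrow> nat option) \<Rightarrow> nat \<Rightarrow> nat option" where
  "glue_companion K cpT cps n =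
     (if n < K then cpT n else map_option (sub_node K (sub_part K n)) (cps (sub_part K n) (sub_local K n)))"

lemma glue_children_sub_node [simp]: "glue_children K chT chs (sub_node K j m) = map (sub_node K j) (chs j m)"
  by (simp add: glue_children_def)

lemma glue_label_sub_node [simp]: "glue_label K T S (sub_node K j m) = S j m"
  by (simp add: glue_label_def)

lemma glue_companion_sub_node [simp]:
  "glue_companion K cpT cps (sub_node K j m) = map_option (sub_node K j) (cps j m)"
  by (simp add: glue_companion_def)

lemma glue_children_top [simp]: "n < K \<Longrightarrow> glue_children K chT chs n = chT n"
  by (simp add: glue_children_def)

lemma glue_label_top [simp]: "n < K \<Longrightarrow> glue_label K T S n = T n"
  by (simp add: glue_label_def)

lemma glue_companion_top [simp]: "n < K \<Longrightarrow> glue_companion K cpT cps n = cpT n"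
  by (simp add: glue_companion_def)

lemma glue_nodes_cases: "n \<in> glue_nodes K J Ns \<Longrightarrow> n < K \<or> (\<exists>j<J. \<exists>a\<in>Ns j. n = sub_node K j a)"
  unfolding glue_nodes_def by auto

lemma sub_node_in_glue_nodes [simp]: "sub_node K j a \<in> glue_nodes K J Ns \<longleftrightarrow> j < J \<and> a \<in> Ns j"
  unfolding glue_nodes_def by auto

lemma top_in_glue_nodes [simp]: "n < K \<Longrightarrow> n \<in> glue_nodes K J Ns"
  unfolding glue_nodes_def by auto

lemma resolve_sub_node:
  "resolve (glue_companion K cpT cps) (sub_node K j b) = sub_node K j (resolve (cps j) b)"
  by (simp add: resolve_def split: option.splits)

(* The skeleton is a pre-proof except that its children may also be roots of the glued
   pre-proofs, each of which has exactly one parent; the trace condition is only required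
   for the infinite paths that never leave the skeleton. *)
locale glued_preproof =
  fixes K J :: nat and Ns :: "nat \<Rightarrow> nat set" and rts :: "nat \<Rightarrow> nat"
    and chs :: "nat \<Rightarrow> nat \<Rightarrow> nat list" and sqs :: "nat \<Rightarrow> nat \<Rightarrow> ('p, 'a) seq"
    and lbs :: "nat \<Rightarrow> nat \<Rightarrow> ('p, 'a) rl" and cps :: "nat \<Rightarrow> nat \<Rightarrow> nat option"
    and chT :: "nat \<Rightarrow> nat list" and sqT :: "nat \<Rightarrow> ('p, 'a) seq"
    and lbT :: "nat \<Rightarrow> ('p, 'a) rl" and cpT :: "nat \<Rightarrow> nat option"
  assumes K_pos: "0 < K"
    and subproofs: "\<And>j. j < J \<Longrightarrow> preproof (Ns j) (rts j) (chs j) (sqs j) (lbs j) (cps j) \<and>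
      global_trace_condition (Ns j) (chs j) (sqs j) (lbs j) (cps j)"
    and top_children: "\<And>n c. n < K \<Longrightarrow> c \<in> set (chT n) \<Longrightarrow> c < K \<or> (\<exists>j<J. c = sub_node K j (rts j))"
    and top_children_distinct: "\<And>n. n < K \<Longrightarrow> distinct (chT n)"
    and top_root_orphan: "\<And>n. n < K \<Longrightarrow> 0 \<notin> set (chT n)"
    and top_parent: "\<And>m. m < K \<Longrightarrow> m \<noteq> 0 \<Longrightarrow> \<exists>!n. n < K \<and> m \<in> set (chT n)"
    and sub_root_parent: "\<And>j. j < J \<Longrightarrow> \<exists>!n. n < K \<and> sub_node K j (rts j) \<in> set (chT n)"
    and top_reachable: "\<And>m. m < K \<Longrightarrow> (0, m) \<in> {(n, m). n < K \<and> m < K \<and> m \<in> set (chT n)}\<^sup>*"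
    and top_acyclic: "acyclic {(n, m). n < K \<and> m < K \<and> m \<in> set (chT n)}"
    and top_nodes: "\<And>n. n < K \<Longrightarrow>
      (case cpT n of
         Some c \<Rightarrow> chT n = [] \<and> c < K \<and> cpT c = None \<and> chT c \<noteq> [] \<and> sqT c = sqT n
       | None \<Rightarrow> cinst (lbT n) (sqT n) (map (glue_label K sqT sqs) (chT n)))"
    and top_trace: "\<And>f idx. (\<And>k. f k < K) \<Longrightarrow>
      (\<And>k. idx k < length (chT (f k)) \<and> f (Suc k) = resolve cpT (chT (f k) ! idx k)) \<Longrightarrow>
      \<exists>k0 \<tau>. (\<forall>k\<ge>k0. \<tau> k |\<in>| snd (sqT (f k)) \<and> tstep (lbT (f k)) (idx k) (\<tau> k) (\<tau> (Suc k))) \<and>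
        (\<forall>m. \<exists>k\<ge>max m k0. progress (lbT (f k)) (idx k) (\<tau> k) (\<tau> (Suc k)))"
begin

abbreviation "GN \<equiv> glue_nodes K J Ns"
abbreviation "Gch \<equiv> glue_children K chT chs"
abbreviation "Gsq \<equiv> glue_label K sqT sqs"
abbreviation "Glb \<equiv> glue_label K lbT lbs"
abbreviation "Gcp \<equiv> glue_companion K cpT cps"
abbreviation "E \<equiv> tedges GN Gch"
abbreviation "ET \<equiv> {(n, m). n < K \<and> m < K \<and> m \<in> set (chT n)}"
abbreviation "Es j \<equiv> tedges (Ns j) (chs j)"

lemma sub_preproof: "j < J \<Longrightarrow> preproof (Ns j) (rts j) (chs j) (sqs j) (lbs j) (cps j)"
  using subproofs by blast

lemma sub_gtc: "j < J \<Longrightarrow> global_trace_condition (Ns j) (chs j) (sqs j) (lbs j) (cps j)"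
  using subproofs by blast

lemma glue_children_ok: "n \<in> GN \<Longrightarrow> set (Gch n) \<subseteq> GN \<and> distinct (Gch n)"
proof -
  assume n: "n \<in> GN"
  from glue_nodes_cases[OF n] show ?thesis
  proof
    assume nK: "n < K"
    have "c \<in> GN" if "c \<in> set (chT n)" for c
      using top_children[OF nK that] preproofD(2)[OF sub_preproof] by auto
    then show ?thesis using nK top_children_distinct by auto
  next
    assume "\<exists>j<J. \<exists>a\<in>Ns j. n = sub_node K j a"
    then obtain j a where ja: "j < J" "a \<in> Ns j" "n = sub_node K j a" by blast
    have "set (chs j a) \<subseteq> Ns j" "distinct (chs j a)" using preproofD(3)[OF sub_preproof[OF ja(1)] ja(2)] by auto
    then show ?thesis using ja by (auto simp: distinct_map inj_on_def)
  qed
qed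

lemma edge_top: "n < K \<Longrightarrow> (n, m) \<in> E \<longleftrightarrow> m \<in> set (chT n)"
  by (simp add: tedges_def)

lemma edge_sub: "j < J \<Longrightarrow> (sub_node K j a, m) \<in> E \<longleftrightarrow> (\<exists>b. m = sub_node K j b \<and> (a, b) \<in> Es j)"
  by (auto simp: tedges_def)

lemma edge_from_sub: "(n, m) \<in> E \<Longrightarrow> K \<le> n \<Longrightarrow> \<exists>j<J. \<exists>a b. n = sub_node K j a \<and> m = sub_node K j b \<and> (a, b) \<in> Es j"
proof -
  assume e: "(n, m) \<in> E" and nK: "K \<le> n"
  then have "n \<in> GN" by (simp add: tedges_def)
  then obtain j a where ja: "j < J" "a \<in> Ns j" "n = sub_node K j a" using glue_nodes_cases nK by force
  then show ?thesis using e edge_sub by blast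
qed

lemma trancl_from_sub: "(x, y) \<in> E\<^sup>+ \<Longrightarrow> K \<le> x \<Longrightarrow> \<exists>j<J. \<exists>a b. x = sub_node K j a \<and> y = sub_node K j b \<and> (a, b) \<in> (Es j)\<^sup>+"
proof (induction rule: trancl_induct)
  case (base y)
  then show ?case using edge_from_sub by blast
next
  case (step y z)
  then obtain j a b where jab: "j < J" "x = sub_node K j a" "y = sub_node K j b" "(a, b) \<in> (Es j)\<^sup>+" by blast
  then obtain c where c: "z = sub_node K j c" "(b, c) \<in> Es j" using step.hyps(2) edge_sub by blast
  have "(a, c) \<in> (Es j)\<^sup>+" using jab(4) c(2) by (rule trancl_into_trancl)
  then show ?case using jab c by blast
qed

lemma trancl_from_top: "(x, y) \<in> E\<^sup>+ \<Longrightarrow> x < K \<Longrightarrow> (y < K \<and> (x, y) \<in> ET\<^sup>+) \<or> K \<le> y"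
proof (induction rule: trancl_induct)
  case (base y)
  then show ?case using edge_top[of x y] by (cases "y < K") auto
next
  case (step y z)
  show ?case
  proof (cases "y < K")
    case True
    with step have yET: "(x, y) \<in> ET\<^sup>+" by auto
    have "z \<in> set (chT y)" using step.hyps(2) edge_top[OF True] by blast
    then show ?thesis using yET True by (cases "z < K") (auto intro: trancl_into_trancl)
  next
    case False
    then show ?thesis using edge_from_sub[OF step.hyps(2)] sub_node_ge by auto
  qed
qed

lemma acyclic_edges: "acyclic E"
  unfolding acyclic_def
proof
  fix x show "(x, x) \<notin> E\<^sup>+"
  proof
    assume xx: "(x, x) \<in> E\<^sup>+"
    show False
    proof (cases "x < K")
      case True
      then have "(x, x) \<in> ET\<^sup>+" using trancl_from_top[OF xx] by auto
      then show False using top_acyclic unfolding acyclic_def by blast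
    next
      case False
      then obtain j a b where jab: "j < J" "x = sub_node K j a" "x = sub_node K j b" "(a, b) \<in> (Es j)\<^sup>+" using trancl_from_sub[OF xx] by auto
      then have "(a, a) \<in> (Es j)\<^sup>+" by simp
      then show False using preproofD(7)[OF sub_preproof[OF jab(1)]] unfolding acyclic_def by blast
    qed
  qed
qed

lemma sub_reach: "j < J \<Longrightarrow> (a, b) \<in> (Es j)\<^sup>* \<Longrightarrow> (sub_node K j a, sub_node K j b) \<in> E\<^sup>*"
proof -
  assume j: "j < J" and ab: "(a, b) \<in> (Es j)\<^sup>*"
  from ab show ?thesis
  proof (induction rule: rtrancl_induct)
    case base then show ?case by simp
  next
    case (step y z)
    have "(sub_node K j y, sub_node K j z) \<in> E" using step j edge_sub by blast
    then show ?case using step by (meson rtrancl.rtrancl_into_rtrancl)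
  qed
qed

lemma reachable_from_root: "m \<in> GN \<Longrightarrow> (0, m) \<in> E\<^sup>*"
proof -
  have ETE: "ET \<subseteq> E" using edge_top by auto
  have top: "(0, m) \<in> E\<^sup>*" if "m < K" for m using top_reachable[OF that] rtrancl_mono[OF ETE] by blast
  assume m: "m \<in> GN"
  from glue_nodes_cases[OF m] show ?thesis
  proof
    assume "m < K" then show ?thesis by (rule top)
  next
    assume "\<exists>j<J. \<exists>a\<in>Ns j. m = sub_node K j a"
    then obtain j b where jb: "j < J" "b \<in> Ns j" "m = sub_node K j b" by blast
    obtain n where n: "n < K" "sub_node K j (rts j) \<in> set (chT n)" using sub_root_parent[OF jb(1)] by blast
    have 1: "(0, n) \<in> E\<^sup>*" by (rule top[OF n(1)])
    have 2: "(n, sub_node K j (rts j)) \<in> E" using n edge_top by blast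
    have 3: "(sub_node K j (rts j), m) \<in> E\<^sup>*" using sub_reach[OF jb(1) preproofD(6)[OF sub_preproof[OF jb(1)] jb(2)]] jb(3) by simp
    show ?thesis using 1 2 3 by (meson rtrancl.rtrancl_into_rtrancl rtrancl_trans)
  qed
qed

lemma parent_from_sub:
  assumes "n \<in> GN" "sub_node K j b \<in> set (Gch n)" "K \<le> n"
  shows "\<exists>a. n = sub_node K j a \<and> a \<in> Ns j \<and> b \<in> set (chs j a)"
proof -
  obtain j' a where "j' < J" "a \<in> Ns j'" "n = sub_node K j' a"
    using glue_nodes_cases[OF assms(1)] assms(3) by force
  with assms(2) show ?thesis by auto
qed

lemma unique_parent_top:
  assumes "m < K" "m \<noteq> 0" shows "\<exists>!n. n \<in> GN \<and> m \<in> set (Gch n)"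
proof -
  obtain n where n: "n < K" "m \<in> set (chT n)" and unique: "\<And>n'. n' < K \<Longrightarrow> m \<in> set (chT n') \<Longrightarrow> n' = n"
    using top_parent[OF assms] by blast
  show ?thesis
  proof (rule ex1I[of _ n])
    show "n \<in> GN \<and> m \<in> set (Gch n)" using n by simp
  next
    fix n' assume n': "n' \<in> GN \<and> m \<in> set (Gch n')"
    have "n' < K"
    proof (rule ccontr)
      assume "\<not> n' < K"
      moreover have "(n', m) \<in> E" using n' by (simp add: tedges_def)
      ultimately obtain j b where "m = sub_node K j b" using edge_from_sub[of n' m] by force
      then show False using assms(1) by simp
    qed
    then show "n' = n" using n' unique by simp
  qed
qed

lemma unique_parent_sub_root:
  assumes "j < J" shows "\<exists>!n. n \<in> GN \<and> sub_node K j (rts j) \<in> set (Gch n)"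
proof -
  obtain n where n: "n < K" "sub_node K j (rts j) \<in> set (chT n)"
    and unique: "\<And>n'. n' < K \<Longrightarrow> sub_node K j (rts j) \<in> set (chT n') \<Longrightarrow> n' = n"
    using sub_root_parent[OF assms] by blast
  show ?thesis
  proof (rule ex1I[of _ n])
    show "n \<in> GN \<and> sub_node K j (rts j) \<in> set (Gch n)" using n by simp
  next
    fix n' assume n': "n' \<in> GN \<and> sub_node K j (rts j) \<in> set (Gch n')"
    have "n' < K"
    proof (rule ccontr)
      assume "\<not> n' < K"
      then obtain a where "a \<in> Ns j" "rts j \<in> set (chs j a)"
        using parent_from_sub[of n' j "rts j"] n' by force
      then show False using preproofD(4)[OF sub_preproof[OF assms]] by blast
    qed
    then show "n' = n" using n' unique by simp
  qed
qed

lemma unique_parent_sub: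
  assumes "j < J" "b \<in> Ns j" "b \<noteq> rts j"
  shows "\<exists>!n. n \<in> GN \<and> sub_node K j b \<in> set (Gch n)"
proof -
  obtain a where a: "a \<in> Ns j" "b \<in> set (chs j a)"
    and unique: "\<And>a'. a' \<in> Ns j \<Longrightarrow> b \<in> set (chs j a') \<Longrightarrow> a' = a"
    using preproofD(5)[OF sub_preproof[OF assms(1)] assms(2,3)] by blast
  have "n' = sub_node K j a" if "n' \<in> GN" "sub_node K j b \<in> set (Gch n')" for n'
  proof (cases "n' < K")
    case True
    with that top_children[of n' "sub_node K j b"] assms(3) show ?thesis by auto
  next
    case False
    with parent_from_sub[OF that] unique show ?thesis by auto
  qed
  with a assms(1) show ?thesis by (intro ex1I[of _ "sub_node K j a"]) auto
qed

lemma unique_parent: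
  assumes "m \<in> GN" "m \<noteq> 0" shows "\<exists>!n. n \<in> GN \<and> m \<in> set (Gch n)"
proof (cases "m < K")
  case True
  then show ?thesis using unique_parent_top assms(2) by blast
next
  case False
  then obtain j b where "j < J" "b \<in> Ns j" "m = sub_node K j b" using glue_nodes_cases[OF assms(1)] by blast
  then show ?thesis using unique_parent_sub_root unique_parent_sub by (cases "b = rts j") auto
qed

lemma glued_node: "n \<in> GN \<Longrightarrow> (case Gcp n of Some c \<Rightarrow> Gch n = [] \<and> c \<in> GN \<and> Gcp c = None \<and> Gch c \<noteq> [] \<and> Gsq c = Gsq n
                                  | None \<Rightarrow> cinst (Glb n) (Gsq n) (map Gsq (Gch n)))"
proof -
  assume n: "n \<in> GN"
  from glue_nodes_cases[OF n] show ?thesis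
  proof
    assume nK: "n < K"
    show ?thesis using top_nodes[OF nK] nK by (auto split: option.splits)
  next
    assume "\<exists>j<J. \<exists>a\<in>Ns j. n = sub_node K j a"
    then obtain j a where ja: "j < J" "a \<in> Ns j" "n = sub_node K j a" by blast
    have h: "case cps j a of Some c \<Rightarrow> chs j a = [] \<and> c \<in> Ns j \<and> cps j c = None \<and> chs j c \<noteq> [] \<and> sqs j c = sqs j a
         | None \<Rightarrow> cinst (lbs j a) (sqs j a) (map (sqs j) (chs j a))" by (rule preproof_node[OF sub_preproof[OF ja(1)] ja(2)])
    have m: "Gsq \<circ> sub_node K j = sqs j" by (rule ext) simp
    show ?thesis using h ja m by (auto split: option.splits)
  qed
qed

lemma preproof_glued: "preproof GN 0 Gch Gsq Glb Gcp"
  unfolding preproof_def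
proof (intro conjI ballI impI)
  show "finite GN" unfolding glue_nodes_def using preproofD(1)[OF sub_preproof] by auto
  show "0 \<in> GN" using K_pos by simp
  show "set (Gch n) \<subseteq> GN" if "n \<in> GN" for n using glue_children_ok[OF that] by blast
  show "distinct (Gch n)" if "n \<in> GN" for n using glue_children_ok[OF that] by blast
  show "0 \<notin> set (Gch n)" if n: "n \<in> GN" for n
  proof (cases "n < K")
    case True then show ?thesis using top_root_orphan by simp
  next
    case False
    then obtain j a where "n = sub_node K j a" using glue_nodes_cases n by force
    moreover have "0 \<noteq> sub_node K j b" for b using K_pos sub_node_ge[of K j b] by linarith
    ultimately show ?thesis by (metis glue_children_sub_node imageE list.set_map)
  qed
  show "\<exists>!n. n \<in> GN \<and> m \<in> set (Gch n)" if "m \<in> GN" "m \<noteq> 0" for m using unique_parent that by blast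
  show "(0, m) \<in> E\<^sup>*" if "m \<in> GN" for m using reachable_from_root that by blast
  show "acyclic E" by (rule acyclic_edges)
  show "case Gcp n of Some c \<Rightarrow> Gch n = [] \<and> c \<in> GN \<and> Gcp c = None \<and> Gch c \<noteq> [] \<and> Gsq c = Gsq n
                                  | None \<Rightarrow> cinst (Glb n) (Gsq n) (map Gsq (Gch n))" if "n \<in> GN" for n
    using glued_node that by blast
qed


lemma path_in_glue_nodes: "inf_path GN Gch Gcp f idx \<Longrightarrow> f k \<in> GN"
proof (induction k)
  case 0 then show ?case by (simp add: inf_path_def)
next
  case (Suc k)
  then have a: "idx k < length (Gch (f k))" "f (Suc k) = resolve Gcp (Gch (f k) ! idx k)" by (auto simp: inf_path_def)
  have "Gch (f k) ! idx k \<in> GN" using glue_children_ok[OF Suc.IH[OF Suc.prems]] a(1) nth_mem by blast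
  then show ?case using preproof_resolve[OF preproof_glued] a(2) by simp
qed

lemma gtc_top_path:
  assumes path: "inf_path GN Gch Gcp f idx" and top: "\<And>k. f k < K"
  shows "\<exists>k0 \<tau>. (\<forall>k\<ge>k0. \<tau> k |\<in>| snd (Gsq (f k)) \<and> tstep (Glb (f k)) (idx k) (\<tau> k) (\<tau> (Suc k))) \<and>
    (\<forall>m. \<exists>k\<ge>max m k0. progress (Glb (f k)) (idx k) (\<tau> k) (\<tau> (Suc k)))"
proof -
  have "idx k < length (chT (f k)) \<and> f (Suc k) = resolve cpT (chT (f k) ! idx k)" for k
  proof -
    let ?c = "chT (f k) ! idx k"
    have "idx k < length (Gch (f k)) \<and> f (Suc k) = resolve Gcp (Gch (f k) ! idx k)"
      using path by (simp add: inf_path_def)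
    then have i: "idx k < length (chT (f k))" and next_node: "f (Suc k) = resolve Gcp ?c"
      using top[of k] by simp_all
    have "?c < K"
    proof (rule ccontr)
      assume "\<not> ?c < K"
      then obtain j where "?c = sub_node K j (rts j)" using top_children[OF top[of k]] i by force
      then show False using next_node top[of "Suc k"] by (simp add: resolve_sub_node)
    qed
    then show ?thesis using i next_node by (simp add: resolve_def)
  qed
  from top_trace[of f idx, OF top this] show ?thesis using top by simp
qed

lemma path_enters_sub:
  assumes path: "inf_path GN Gch Gcp f idx" and "\<not> f k1 < K"
  shows "\<exists>j g. j < J \<and> inf_path (Ns j) (chs j) (cps j) g (\<lambda>k. idx (k1 + k)) \<and>
    (\<forall>k. f (k1 + k) = sub_node K j (g k))"
proof -
  have fN: "f k \<in> GN" for k using path_in_glue_nodes[OF path] .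
  obtain j a0 where j: "j < J" "a0 \<in> Ns j" "f k1 = sub_node K j a0"
    using glue_nodes_cases[OF fN[of k1]] assms(2) by blast
  have step: "idx k < length (Gch (f k)) \<and> f (Suc k) = resolve Gcp (Gch (f k) ! idx k)" for k
    using path by (simp add: inf_path_def)
  have stays: "\<exists>a. a \<in> Ns j \<and> f (k1 + k) = sub_node K j a" for k
  proof (induction k)
    case (Suc k)
    then obtain a where a: "a \<in> Ns j" "f (k1 + k) = sub_node K j a" by blast
    then have "chs j a ! idx (k1 + k) \<in> Ns j"
      using step[of "k1 + k"] preproofD(3)[OF sub_preproof[OF j(1)] a(1)] by auto
    moreover have "f (k1 + Suc k) = sub_node K j (resolve (cps j) (chs j a ! idx (k1 + k)))"
      using step[of "k1 + k"] a by (simp add: resolve_sub_node)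
    ultimately show ?case using preproof_resolve(1)[OF sub_preproof[OF j(1)]] by blast
  qed (use j in auto)
  define g where "g k = sub_local K (f (k1 + k))" for k
  have fg: "f (k1 + k) = sub_node K j (g k) \<and> g k \<in> Ns j" for k
    using stays[of k] unfolding g_def by auto
  have "inf_path (Ns j) (chs j) (cps j) g (\<lambda>k. idx (k1 + k))"
    unfolding inf_path_def
  proof (intro conjI allI)
    show "g 0 \<in> Ns j" using fg[of 0] by simp
    fix k
    show "idx (k1 + k) < length (chs j (g k))" using step[of "k1 + k"] fg[of k] by simp
    have "f (k1 + Suc k) = sub_node K j (resolve (cps j) (chs j (g k) ! idx (k1 + k)))"
      using step[of "k1 + k"] fg[of k] by (simp add: resolve_sub_node)
    then show "g (Suc k) = resolve (cps j) (chs j (g k) ! idx (k1 + k))" using fg[of "Suc k"] by simp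
  qed
  with j(1) fg show ?thesis by blast
qed

lemma gtc_glued: "global_trace_condition GN Gch Gsq Glb Gcp"
  unfolding global_trace_condition_def
proof (intro allI impI)
  fix f idx assume path: "inf_path GN Gch Gcp f idx"
  show "\<exists>k0 \<tau>. (\<forall>k\<ge>k0. \<tau> k |\<in>| snd (Gsq (f k)) \<and> tstep (Glb (f k)) (idx k) (\<tau> k) (\<tau> (Suc k))) \<and>
         (\<forall>m. \<exists>k\<ge>max m k0. progress (Glb (f k)) (idx k) (\<tau> k) (\<tau> (Suc k)))"
  proof (cases "\<forall>k. f k < K")
    case True
    then show ?thesis using gtc_top_path[OF path] by blast
  next
    case False
    then obtain k1 where "\<not> f k1 < K" by blast
    then obtain j g where j: "j < J" "inf_path (Ns j) (chs j) (cps j) g (\<lambda>k. idx (k1 + k))"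
      and fg: "\<forall>k. f (k1 + k) = sub_node K j (g k)"
      using path_enters_sub[OF path] by blast
    obtain k0 \<tau> where
      trace: "\<forall>k\<ge>k0. \<tau> k |\<in>| snd (sqs j (g k)) \<and> tstep (lbs j (g k)) (idx (k1 + k)) (\<tau> k) (\<tau> (Suc k))"
      and progress: "\<forall>m. \<exists>k\<ge>max m k0. progress (lbs j (g k)) (idx (k1 + k)) (\<tau> k) (\<tau> (Suc k))"
      using sub_gtc[OF j(1), unfolded global_trace_condition_def, rule_format, OF j(2)] by blast
    show ?thesis
    proof (intro exI[of _ "k1 + k0"] exI[of _ "\<lambda>k. \<tau> (k - k1)"] conjI)
      show "\<forall>k\<ge>k1 + k0. \<tau> (k - k1) |\<in>| snd (Gsq (f k)) \<and>
        tstep (Glb (f k)) (idx k) (\<tau> (k - k1)) (\<tau> (Suc k - k1))"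
      proof (intro allI impI)
        fix k assume "k1 + k0 \<le> k"
        define d where "d = k - k1"
        have "k = k1 + d" "k0 \<le> d" using \<open>k1 + k0 \<le> k\<close> by (simp_all add: d_def)
        then show "\<tau> (k - k1) |\<in>| snd (Gsq (f k)) \<and> tstep (Glb (f k)) (idx k) (\<tau> (k - k1)) (\<tau> (Suc k - k1))"
          using trace fg[rule_format, of d] by simp
      qed
      show "\<forall>m. \<exists>k\<ge>max m (k1 + k0). progress (Glb (f k)) (idx k) (\<tau> (k - k1)) (\<tau> (Suc k - k1))"
      proof
        fix m
        obtain k' where "k' \<ge> max m k0" "progress (lbs j (g k')) (idx (k1 + k')) (\<tau> k') (\<tau> (Suc k'))"
          using progress by blast
        then show "\<exists>k\<ge>max m (k1 + k0). progress (Glb (f k)) (idx k) (\<tau> (k - k1)) (\<tau> (Suc k - k1))"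
          using fg[rule_format, of k'] by (intro exI[of _ "k1 + k'"]) auto
      qed
    qed
  qed
qed

lemma cprov_glued: "cprov (sqT 0)"
  unfolding cprov_def using preproof_glued gtc_glued K_pos
  by (intro exI[of _ GN] exI[of _ 0] exI[of _ Gch] exI[of _ Gsq] exI[of _ Glb] exI[of _ Gcp]) simp

end

lemma cprov_family:
  assumes "\<And>j. j < J \<Longrightarrow> cprov (Q j)"
  obtains Ns rts chs sqs lbs cps where "\<And>j. j < J \<Longrightarrow>
    preproof (Ns j) (rts j) (chs j) (sqs j) (lbs j) (cps j) \<and>
    global_trace_condition (Ns j) (chs j) (sqs j) (lbs j) (cps j) \<and> sqs j (rts j) = Q j"
proof -
  define ok where "ok j t \<longleftrightarrow> (case t of (N, rt, ch, sq, lb, cp) \<Rightarrow>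
      preproof N rt ch sq lb cp \<and> global_trace_condition N ch sq lb cp \<and> sq rt = Q j)" for j t
  have "\<exists>t. ok j t" if "j < J" for j
  proof -
    from assms[OF that] obtain N rt ch sq lb cp where
      "preproof N rt ch sq lb cp" "global_trace_condition N ch sq lb cp" "sq rt = Q j"
      unfolding cprov_def by blast
    then show ?thesis by (intro exI[of _ "(N, rt, ch, sq, lb, cp)"]) (simp add: ok_def)
  qed
  then obtain T where T: "\<And>j. j < J \<Longrightarrow> ok j (T j)" by metis
  show ?thesis
  proof (rule that)
    fix j assume "j < J"
    with T[OF this] show "preproof (fst (T j)) (fst (snd (T j))) (fst (snd (snd (T j))))
        (fst (snd (snd (snd (T j))))) (fst (snd (snd (snd (snd (T j)))))) (snd (snd (snd (snd (snd (T j)))))) \<and>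
      global_trace_condition (fst (T j)) (fst (snd (snd (T j)))) (fst (snd (snd (snd (T j)))))
        (fst (snd (snd (snd (snd (T j)))))) (snd (snd (snd (snd (snd (T j)))))) \<and>
      fst (snd (snd (snd (T j)))) (fst (snd (T j))) = Q j"
      by (cases "T j" rule: prod_cases6) (simp add: ok_def)
  qed
qed

lemma glued_preproof_rule:
  assumes rule: "cinst r S Ps"
    and subproofs: "\<And>j. j < length Ps \<Longrightarrow> preproof (Ns j) (rts j) (chs j) (sqs j) (lbs j) (cps j) \<and>
      global_trace_condition (Ns j) (chs j) (sqs j) (lbs j) (cps j) \<and> sqs j (rts j) = Ps ! j"
  shows "glued_preproof 1 (length Ps) Ns rts chs sqs lbs cps
    (\<lambda>n. if n = 0 then map (\<lambda>j. sub_node 1 j (rts j)) [0..<length Ps] else []) (\<lambda>_. S) (\<lambda>_. r) (\<lambda>_. None)"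
    (is "glued_preproof _ _ _ _ _ _ _ _ ?chT _ _ _")
proof
  show "0 < (1::nat)" by simp
  show "preproof (Ns j) (rts j) (chs j) (sqs j) (lbs j) (cps j) \<and>
      global_trace_condition (Ns j) (chs j) (sqs j) (lbs j) (cps j)" if "j < length Ps" for j
    using subproofs[OF that] by blast
  show "c < 1 \<or> (\<exists>j<length Ps. c = sub_node 1 j (rts j))" if "n < 1" "c \<in> set (?chT n)" for n c
    using that by auto
  show "distinct (?chT n)" if "n < 1" for n
    by (auto simp: distinct_map inj_on_def)
  show "0 \<notin> set (?chT n)" if "n < 1" for n
    by (auto simp: sub_node_def)
  show "\<exists>!n. n < 1 \<and> m \<in> set (?chT n)" if "m < 1" "m \<noteq> 0" for m
    using that by simp
  show "\<exists>!n. n < 1 \<and> sub_node 1 j (rts j) \<in> set (?chT n)" if "j < length Ps" for j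
    using that by (intro ex1I[of _ 0]) auto
  show "(0, m) \<in> {(n, m). n < 1 \<and> m < 1 \<and> m \<in> set (?chT n)}\<^sup>*" if "m < 1" for m
    using that by simp
  have no_top_edges: "{(n, m). n < (1::nat) \<and> m < 1 \<and> m \<in> set (?chT n)} = {}"
    by (auto simp: sub_node_def)
  show "acyclic {(n, m). n < (1::nat) \<and> m < 1 \<and> m \<in> set (?chT n)}"
    unfolding no_top_edges by (simp add: acyclic_def)
  have "map (glue_label 1 (\<lambda>_. S) sqs) (?chT 0) = map (\<lambda>j. Ps ! j) [0..<length Ps]"
    using subproofs by simp
  also have "\<dots> = Ps" by (rule map_nth)
  finally show "case None of Some c \<Rightarrow> ?chT n = [] \<and> c < 1 \<and> None = None \<and> ?chT c \<noteq> [] \<and> S = S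
      | None \<Rightarrow> cinst r S (map (glue_label 1 (\<lambda>_. S) sqs) (?chT n))" if "n < 1" for n
    using that rule by simp
  show "\<exists>k0 \<tau>. (\<forall>k\<ge>k0. \<tau> k |\<in>| snd S \<and> tstep r (idx k) (\<tau> k) (\<tau> (Suc k))) \<and>
      (\<forall>m. \<exists>k\<ge>max m k0. progress r (idx k) (\<tau> k) (\<tau> (Suc k)))"
    if path: "\<And>k. f k < 1" "\<And>k. idx k < length (?chT (f k)) \<and> f (Suc k) = resolve (\<lambda>_. None) (?chT (f k) ! idx k)"
    for f idx
  proof -
    \<comment> \<open>a one-node skeleton without buds has no infinite path\<close>
    have "f 0 = 0" "f 1 = 0" using path(1)[of 0] path(1)[of 1] by auto
    with path(2)[of 0] have "sub_node 1 (idx 0) (rts (idx 0)) = 0" by (simp add: resolve_def)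
    then show ?thesis using sub_node_ge[of 1 "idx 0" "rts (idx 0)"] by simp
  qed
qed

lemma cprov_rule:
  assumes "cinst r S Ps" and "\<And>Q. Q \<in> set Ps \<Longrightarrow> cprov Q"
  shows "cprov S"
proof -
  obtain Ns rts chs sqs lbs cps where "\<And>j. j < length Ps \<Longrightarrow>
      preproof (Ns j) (rts j) (chs j) (sqs j) (lbs j) (cps j) \<and>
      global_trace_condition (Ns j) (chs j) (sqs j) (lbs j) (cps j) \<and> sqs j (rts j) = Ps ! j"
    using cprov_family[of "length Ps" "\<lambda>j. Ps ! j"] assms(2) nth_mem by blast
  from glued_preproof.cprov_glued[OF glued_preproof_rule[OF assms(1) this]] show ?thesis by simp
qed

(* The cyclic derivation of \<chi> \<Rightarrow> [\<pi>\<^sup>*]\<chi> from \<chi> \<Rightarrow> [\<pi>]\<chi>, glued at node e to a proof of the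
   weakened premise \<chi> \<Rightarrow> [\<pi>]\<chi>, [\<pi>][\<pi>\<^sup>*]\<chi>:
     0: \<chi> \<Rightarrow> [\<pi>\<^sup>*]\<chi>              (C-s) from 1 and 2
     1: \<chi> \<Rightarrow> \<chi>                  axiom
     2: \<chi> \<Rightarrow> [\<pi>][\<pi>\<^sup>*]\<chi>          cut on [\<pi>]\<chi> from e and 3
     3: [\<pi>]\<chi>, \<chi> \<Rightarrow> [\<pi>][\<pi>\<^sup>*]\<chi>    weakening from 4
     4: [\<pi>]\<chi> \<Rightarrow> [\<pi>][\<pi>\<^sup>*]\<chi>       ([]) from 5
     5: \<chi> \<Rightarrow> [\<pi>\<^sup>*]\<chi>              bud with companion 0
   The only infinite path in the skeleton is the cycle 0, 2, 3, 4, 0, ..., and the trace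
   [\<pi>\<^sup>*]\<chi>, [\<pi>][\<pi>\<^sup>*]\<chi>, ..., [\<pi>\<^sup>*]\<chi> along it progresses at node 0. *)
definition star_children :: "nat \<Rightarrow> nat \<Rightarrow> nat list" where
  "star_children e n =
     (if n = 0 then [1, 2] else if n = 2 then [e, 3] else if n = 3 then [4] else if n = 4 then [5] else [])"

definition star_seq :: "('p, 'a) pg \<Rightarrow> ('p, 'a) fm \<Rightarrow> nat \<Rightarrow> ('p, 'a) seq" where
  "star_seq \<pi> \<chi> n =
     (if n = 1 then ({|\<chi>|}, {|\<chi>|})
      else if n = 2 then ({|\<chi>|}, {|Box \<pi> (Box (Star \<pi>) \<chi>)|})
      else if n = 3 then ({|Box \<pi> \<chi>, \<chi>|}, {|Box \<pi> (Box (Star \<pi>) \<chi>)|})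
      else if n = 4 then ({|Box \<pi> \<chi>|}, {|Box \<pi> (Box (Star \<pi>) \<chi>)|})
      else ({|\<chi>|}, {|Box (Star \<pi>) \<chi>|}))"

definition star_rule :: "('p, 'a) pg \<Rightarrow> ('p, 'a) fm \<Rightarrow> nat \<Rightarrow> ('p, 'a) rl" where
  "star_rule \<pi> \<chi> n =
     (if n = 0 then RCs \<pi> \<chi> else if n = 2 then RCut (Box \<pi> \<chi>) else if n = 3 then RWk
      else if n = 4 then RBox \<pi> (Box (Star \<pi>) \<chi>) else RAx)"

definition star_companion :: "nat \<Rightarrow> nat option" where
  "star_companion n = (if n = 5 then Some 0 else None)"

lemma less_6_cases: "n < (6::nat) \<Longrightarrow> n = 0 \<or> n = 1 \<or> n = 2 \<or> n = 3 \<or> n = 4 \<or> n = 5"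
  by auto

lemma star_skeleton_trace:
  assumes e: "6 \<le> e" and f: "\<And>k. f k < 6"
    and step: "\<And>k. idx k < length (star_children e (f k)) \<and>
      f (Suc k) = resolve star_companion (star_children e (f k) ! idx k)"
  shows "\<exists>k0 \<tau>. (\<forall>k\<ge>k0. \<tau> k |\<in>| snd (star_seq \<pi> \<chi> (f k)) \<and>
      tstep (star_rule \<pi> \<chi> (f k)) (idx k) (\<tau> k) (\<tau> (Suc k))) \<and>
    (\<forall>m. \<exists>k\<ge>max m k0. progress (star_rule \<pi> \<chi> (f k)) (idx k) (\<tau> k) (\<tau> (Suc k)))"
proof -
  have resolve: "resolve star_companion m = (if m = 5 then 0 else m)" for m
    by (simp add: resolve_def star_companion_def)
  have inner: "f k \<noteq> 1" "f k \<noteq> 5" for k using step[of k] by (auto simp: star_children_def)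
  have from0: "idx k = 1 \<and> f (Suc k) = 2" if "f k = 0" for k
  proof -
    have "idx k < 2" "f (Suc k) = resolve star_companion ([1, 2] ! idx k)"
      using step[of k] that by (auto simp: star_children_def)
    moreover have "idx k \<noteq> 0" using calculation inner[of "Suc k"] resolve by (cases "idx k") auto
    ultimately show ?thesis using resolve by (cases "idx k") auto
  qed
  have from2: "idx k = 1 \<and> f (Suc k) = 3" if "f k = 2" for k
  proof -
    have "idx k < 2" "f (Suc k) = resolve star_companion ([e, 3] ! idx k)"
      using step[of k] that by (auto simp: star_children_def)
    moreover have "idx k \<noteq> 0" using calculation f[of "Suc k"] resolve e by (cases "idx k") auto
    ultimately show ?thesis using resolve by (cases "idx k") auto
  qed
  have from3: "idx k = 0 \<and> f (Suc k) = 4" if "f k = 3" for k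
    using step[of k] that resolve by (auto simp: star_children_def)
  have from4: "idx k = 0 \<and> f (Suc k) = 0" if "f k = 4" for k
    using step[of k] that resolve by (auto simp: star_children_def)
  have on_cycle: "f k = 0 \<or> f k = 2 \<or> f k = 3 \<or> f k = 4" for k
    using less_6_cases[OF f[of k]] inner[of k] by auto
  define \<tau> where "\<tau> k = (if f k = 0 then Box (Star \<pi>) \<chi> else Box \<pi> (Box (Star \<pi>) \<chi>))" for k
  have trace: "\<tau> k |\<in>| snd (star_seq \<pi> \<chi> (f k)) \<and> tstep (star_rule \<pi> \<chi> (f k)) (idx k) (\<tau> k) (\<tau> (Suc k))"
    for k
    using on_cycle[of k] from0[of k] from2[of k] from3[of k] from4[of k]
    unfolding \<tau>_def by (auto simp: star_seq_def star_rule_def)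
  have returns: "\<exists>k\<ge>m. f k = 0" for m
    using on_cycle[of m] from4[of m] from3[of m] from4[of "Suc m"] from2[of m] from3[of "Suc m"]
      from4[of "Suc (Suc m)"]
    by (elim disjE) (metis le_refl le_SucI)+
  have "\<exists>k\<ge>max m 0. progress (star_rule \<pi> \<chi> (f k)) (idx k) (\<tau> k) (\<tau> (Suc k))" for m
  proof -
    obtain k where k: "k \<ge> m" "f k = 0" using returns by blast
    then show ?thesis using from0[OF k(2)] unfolding \<tau>_def by (intro exI[of _ k]) (auto simp: star_rule_def)
  qed
  with trace show ?thesis by blast
qed

lemma glued_preproof_star:
  assumes subproof: "preproof (Ns 0) (rts 0) (chs 0) (sqs 0) (lbs 0) (cps 0) \<and>
      global_trace_condition (Ns 0) (chs 0) (sqs 0) (lbs 0) (cps 0) \<and>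
      sqs 0 (rts 0) = ({|\<chi>|}, {|Box \<pi> \<chi>, Box \<pi> (Box (Star \<pi>) \<chi>)|})"
  shows "glued_preproof 6 1 Ns rts chs sqs lbs cps
    (star_children (sub_node 6 0 (rts 0))) (star_seq \<pi> \<chi>) (star_rule \<pi> \<chi>) star_companion"
proof
  define e where "e = sub_node 6 0 (rts 0)"
  have e: "6 \<le> e" unfolding e_def by (rule sub_node_ge)
  show "\<exists>!n. n < 6 \<and> m \<in> set (star_children (sub_node 6 0 (rts 0)) n)" if "m < 6" "m \<noteq> 0" for m
  proof (rule ex1I[of _ "if m \<le> 2 then 0 else m - 1"])
    show "(if m \<le> 2 then 0 else m - 1) < 6 \<and> m \<in> set (star_children (sub_node 6 0 (rts 0)) (if m \<le> 2 then 0 else m - 1))"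
      using that less_6_cases[OF that(1)] e by (auto simp: star_children_def e_def)
    show "n = (if m \<le> 2 then 0 else m - 1)" if "n < 6 \<and> m \<in> set (star_children (sub_node 6 0 (rts 0)) n)" for n
      using that less_6_cases[of n] less_6_cases[OF \<open>m < 6\<close>] e by (auto simp: star_children_def e_def)
  qed
  show "\<exists>!n. n < 6 \<and> sub_node 6 j (rts j) \<in> set (star_children (sub_node 6 0 (rts 0)) n)" if "j < 1" for j
    using that e by (intro ex1I[of _ 2]) (auto simp: star_children_def e_def split: if_splits)
  let ?E = "{(n, m). n < 6 \<and> m < (6::nat) \<and> m \<in> set (star_children (sub_node 6 0 (rts 0)) n)}"
  have edges: "(0, 1) \<in> ?E" "(0, 2) \<in> ?E" "(2, 3) \<in> ?E" "(3, 4) \<in> ?E" "(4, 5) \<in> ?E"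
    by (simp_all add: star_children_def)
  show "(0, m) \<in> ?E\<^sup>*" if "m < 6" for m
    using less_6_cases[OF that] edges by (meson r_into_rtrancl rtrancl_trans rtrancl.rtrancl_refl)
  have "?E \<subseteq> less_than" using e by (auto simp: star_children_def e_def split: if_splits)
  then show "acyclic ?E" using wf_less_than by (meson wf_acyclic wf_subset)
  show "case star_companion n of
      Some c \<Rightarrow> star_children (sub_node 6 0 (rts 0)) n = [] \<and> c < 6 \<and> star_companion c = None \<and>
        star_children (sub_node 6 0 (rts 0)) c \<noteq> [] \<and> star_seq \<pi> \<chi> c = star_seq \<pi> \<chi> n
    | None \<Rightarrow> cinst (star_rule \<pi> \<chi> n) (star_seq \<pi> \<chi> n)
        (map (glue_label 6 (star_seq \<pi> \<chi>) sqs) (star_children (sub_node 6 0 (rts 0)) n))"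
    if "n < 6" for n
  proof -
    have "cinst (RCs \<pi> \<chi>) ({|\<chi>|}, {|Box (Star \<pi>) \<chi>|}) [({|\<chi>|}, {|\<chi>|}), ({|\<chi>|}, {|Box \<pi> (Box (Star \<pi>) \<chi>)|})]"
      using cinst.Cs[of \<pi> \<chi> "{|\<chi>|}" "{||}"] by simp
    moreover have "cinst RAx ({|\<chi>|}, {|\<chi>|}) []" by (rule ccommon, rule common.Ax) auto
    moreover have "cinst (RCut (Box \<pi> \<chi>)) ({|\<chi>|}, {|Box \<pi> (Box (Star \<pi>) \<chi>)|})
        [({|\<chi>|}, {|Box \<pi> \<chi>, Box \<pi> (Box (Star \<pi>) \<chi>)|}), ({|Box \<pi> \<chi>, \<chi>|}, {|Box \<pi> (Box (Star \<pi>) \<chi>)|})]"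
      using ccommon[OF common.Cut[of "Box \<pi> \<chi>" "{|\<chi>|}" "{|Box \<pi> (Box (Star \<pi>) \<chi>)|}"]] by simp
    moreover have "cinst RWk ({|Box \<pi> \<chi>, \<chi>|}, {|Box \<pi> (Box (Star \<pi>) \<chi>)|})
        [({|Box \<pi> \<chi>|}, {|Box \<pi> (Box (Star \<pi>) \<chi>)|})]"
      by (rule ccommon, rule common.Wk) auto
    moreover have "cinst (RBox \<pi> (Box (Star \<pi>) \<chi>)) ({|Box \<pi> \<chi>|}, {|Box \<pi> (Box (Star \<pi>) \<chi>)|})
        [({|\<chi>|}, {|Box (Star \<pi>) \<chi>|})]"
      using ccommon[OF common.BoxR[of \<pi> "Box (Star \<pi>) \<chi>" "{|\<chi>|}" "{||}"]] by simp
    ultimately show ?thesis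
      using less_6_cases[OF that] subproof e
      by (auto simp: star_children_def star_seq_def star_rule_def star_companion_def e_def glue_label_def)
  qed
  show "\<exists>k0 \<tau>. (\<forall>k\<ge>k0. \<tau> k |\<in>| snd (star_seq \<pi> \<chi> (f k)) \<and> tstep (star_rule \<pi> \<chi> (f k)) (idx k) (\<tau> k) (\<tau> (Suc k))) \<and>
      (\<forall>m. \<exists>k\<ge>max m k0. progress (star_rule \<pi> \<chi> (f k)) (idx k) (\<tau> k) (\<tau> (Suc k)))"
    if "\<And>k. f k < 6" "\<And>k. idx k < length (star_children (sub_node 6 0 (rts 0)) (f k)) \<and>
      f (Suc k) = resolve star_companion (star_children (sub_node 6 0 (rts 0)) (f k) ! idx k)" for f idx
    using star_skeleton_trace[of "sub_node 6 0 (rts 0)" f idx, OF sub_node_ge that] .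
qed (use subproof sub_node_ge[of 6 0 "rts 0"] in \<open>auto simp: star_children_def split: if_splits\<close>)

lemma cprov_star_induction:
  assumes "cprov ({|\<chi>|}, {|Box \<pi> \<chi>|})"
  shows "cprov ({|\<chi>|}, {|Box (Star \<pi>) \<chi>|})"
proof -
  have "cinst RWk ({|\<chi>|}, {|Box \<pi> \<chi>, Box \<pi> (Box (Star \<pi>) \<chi>)|}) [({|\<chi>|}, {|Box \<pi> \<chi>|})]"
    by (rule ccommon, rule common.Wk) auto
  then have "cprov ({|\<chi>|}, {|Box \<pi> \<chi>, Box \<pi> (Box (Star \<pi>) \<chi>)|})"
    by (rule cprov_rule) (use assms in simp)
  then obtain Ns rts chs sqs lbs cps where "\<And>j::nat. j < 1 \<Longrightarrow>
      preproof (Ns j) (rts j) (chs j) (sqs j) (lbs j) (cps j) \<and>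
      global_trace_condition (Ns j) (chs j) (sqs j) (lbs j) (cps j) \<and>
      sqs j (rts j) = ({|\<chi>|}, {|Box \<pi> \<chi>, Box \<pi> (Box (Star \<pi>) \<chi>)|})"
    using cprov_family[of 1 "\<lambda>_. ({|\<chi>|}, {|Box \<pi> \<chi>, Box \<pi> (Box (Star \<pi>) \<chi>)|})"] by blast
  from glued_preproof.cprov_glued[OF glued_preproof_star[of Ns rts chs sqs lbs cps, OF this[of 0, simplified]]] show ?thesis
    by (simp add: star_seq_def)
qed

lemma derivable_cprov: "derivable cprov"
proof
  fix r S Ps assume "common r S Ps" and premises_cprov: "\<And>Q. Q \<in> set Ps \<Longrightarrow> cprov Q"
  from ccommon[OF this(1)] show "cprov S" by (rule cprov_rule) (rule premises_cprov)
next
  fix \<chi> \<pi> assume "cprov ({|\<chi>|}, {|Box \<pi> \<chi>|})"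
  then show "cprov ({|\<chi>|}, {|Box (Star \<pi>) \<chi>|})" by (rule cprov_star_induction)
qed

theorem cprov_iff_valid_nat: "cprov S \<longleftrightarrow> valid TYPE(nat) S"
  using cprov_sound derivable.completeness[OF derivable_cprov] by blast

theorem mainTheorem6:
  fixes S :: "('p, 'a) seq"
  shows "(gprov S \<longleftrightarrow> cprov S)
       \<and> (cprov S \<longleftrightarrow> valid TYPE(nat) S)
       \<and> (cprov S \<longrightarrow> valid TYPE('w) S)"
  using gprov_iff_valid_nat[of S] cprov_iff_valid_nat[of S] cprov_sound[of S] by blast

end
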